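(* Let $G$ be a connected graph with $n$ vertices and at least one edge, and let $\Lambda(G^{(3)})$ be the second-largest modulus among the eigenvalues of the $3$-power hypergraph $G^{(3)}$. Then $$\Lambda(G^{(3)})=\begin{cases}\sqrt[3]{\rho_V(G)^2}, & \text{if $G$ is a tree},\\ \max\{\sqrt[3]{\rho_V(G)^2},\sqrt[3]{\lambda_n(G)^2}\}, & \text{if $G$ is unicyclic with an odd cycle},\\ \max\{\sqrt[3]{\rho_V(G)^2},\sqrt[3]{\rho_\Gamma(G)^2}\}, & \text{if $G$ is bipartite but not a tree},\\ \max\{\sqrt[3]{\rho_V(G)^2},\sqrt[3]{\rho_\Gamma(G)^2},\sqrt[3]{\lambda_n(G)^2}\}, & \text{otherwise}.\end{cases}$$
   Context: For a graph $G=(V,E)$, the $3$-power hypergraph $G^{(3)}$ is the $3$-uniform hypergraph obtained by adding one new vertex $w_e$ to each edge $e$ (distinct for distinct edges) and taking hyperedges $e\cup\{w_e\}$. For a $3$-uniform hypergraph $H$ on $[n]$, $\lambda\in\mathbb{C}$ is an eigenvalue if there is a nonzero $\mathbf{x}\in\mathbb{C}^n$ with $\sum_{\{i,j,l\}\in E(H)} x_jx_l=\lambda x_i^{2}$ for every vertex $i$ (sum over hyperedges containing $i$, with $j,l$ the other two vertices); equivalently, eigenvalues of the adjacency tensor with entries $1/2$ on hyperedges. The second-largest modulus among the eigenvalues is the largest $|\mu|$ over eigenvalues with $|\mu|$ strictly less than the maximum modulus. $\lambda_n(G)$ is the smallest adjacency eigenvalue of $G$; $\rho(\cdot)$ is spectral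 radius; $\rho_V(G)=\max_{v\in V}\rho(G-v)$. A signed graph $G_\pi$ is $(G,\pi)$ with $\pi:E\to\{\pm1\}$, adjacency matrix having entry $\pi(\{i,j\})$ for adjacent $i,j$ and $0$ otherwise; $\Gamma(G)=\{G_\pi:\rho(G_\pi)<\rho(G)\}$ and $\rho_\Gamma(G)=\max_{G_\pi\in\Gamma(G)}\rho(G_\pi)$ (this set is nonempty in the last two cases). *)

theory Defs
  imports Complex_Main
begin

definition simple_graph :: "'a set \<Rightarrow> 'a set set \<Rightarrow> bool" where
  "simple_graph V E \<longleftrightarrow> finite V \<and>
     (\<forall>e\<in>E. \<exists>u v. u \<in> V \<and> v \<in> V \<and> u \<noteq> v \<and> e = {u, v})"

definition graph_connected :: "'a set \<Rightarrow> 'a set set \<Rightarrow> bool" where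
  "graph_connected V E \<longleftrightarrow>
     (\<forall>u\<in>V. \<forall>v\<in>V. (u, v) \<in> {(a, b). {a, b} \<in> E}\<^sup>*)"

definition is_tree :: "'a set \<Rightarrow> 'a set set \<Rightarrow> bool" where
  "is_tree V E \<longleftrightarrow> graph_connected V E \<and> card E + 1 = card V"

definition is_unicyclic :: "'a set \<Rightarrow> 'a set set \<Rightarrow> bool" where
  "is_unicyclic V E \<longleftrightarrow> graph_connected V E \<and> card E = card V"

definition is_bipartite :: "'a set \<Rightarrow> 'a set set \<Rightarrow> bool" where
  "is_bipartite V E \<longleftrightarrow> (\<exists>A\<subseteq>V. \<forall>e\<in>E. card (e \<inter> A) = 1)"

definition mat_eigenvalue :: "'a set \<Rightarrow> ('a \<Rightarrow> 'a \<Rightarrow> real) \<Rightarrow> complex \<Rightarrow> bool" where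
  "mat_eigenvalue V M \<mu> \<longleftrightarrow>
     (\<exists>x :: 'a \<Rightarrow> complex. (\<exists>v\<in>V. x v \<noteq> 0) \<and>
        (\<forall>v\<in>V. (\<Sum>u\<in>V. complex_of_real (M v u) * x u) = \<mu> * x v))"

definition spec_radius :: "'a set \<Rightarrow> ('a \<Rightarrow> 'a \<Rightarrow> real) \<Rightarrow> real" where
  "spec_radius V M = Max (cmod ` {\<mu>. mat_eigenvalue V M \<mu>})"

definition min_eigenvalue :: "'a set \<Rightarrow> ('a \<Rightarrow> 'a \<Rightarrow> real) \<Rightarrow> real" where
  "min_eigenvalue V M = Min {\<mu> :: real. mat_eigenvalue V M (complex_of_real \<mu>)}"

definition adj :: "'a set set \<Rightarrow> 'a \<Rightarrow> 'a \<Rightarrow> real" where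
  "adj E u v = (if {u, v} \<in> E then 1 else 0)"

definition signed_adj :: "'a set set \<Rightarrow> ('a set \<Rightarrow> real) \<Rightarrow> 'a \<Rightarrow> 'a \<Rightarrow> real" where
  "signed_adj E \<pi> u v = (if {u, v} \<in> E then \<pi> {u, v} else 0)"

definition lambda_min :: "'a set \<Rightarrow> 'a set set \<Rightarrow> real" where
  "lambda_min V E = min_eigenvalue V (adj E)"

definition graph_rho :: "'a set \<Rightarrow> 'a set set \<Rightarrow> real" where
  "graph_rho V E = spec_radius V (adj E)"

definition rho_V :: "'a set \<Rightarrow> 'a set set \<Rightarrow> real" where
  "rho_V V E = Max ((\<lambda>v. graph_rho (V - {v}) {e\<in>E. v \<notin> e}) ` V)"

definition rho_Gamma :: "'a set \<Rightarrow> 'a set set \<Rightarrow> real" where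
  "rho_Gamma V E = Max {spec_radius V (signed_adj E \<pi>) | \<pi>.
      (\<forall>e\<in>E. \<pi> e = 1 \<or> \<pi> e = -1) \<and>
      spec_radius V (signed_adj E \<pi>) < graph_rho V E}"

definition hg_eigenvalue :: "'b set \<Rightarrow> 'b set set \<Rightarrow> complex \<Rightarrow> bool" where
  "hg_eigenvalue VH EH lam \<longleftrightarrow>
     (\<exists>x :: 'b \<Rightarrow> complex. (\<exists>i\<in>VH. x i \<noteq> 0) \<and>
        (\<forall>i\<in>VH. (\<Sum>h\<in>{h\<in>EH. i \<in> h}. \<Prod>j\<in>h - {i}. x j) = lam * (x i)\<^sup>2))"

definition power3_vertices :: "'a set \<Rightarrow> 'a set set \<Rightarrow> ('a + 'a set) set" where
  "power3_vertices V E = Inl ` V \<union> Inr ` E"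

definition power3_edges :: "'a set set \<Rightarrow> ('a + 'a set) set set" where
  "power3_edges E = (\<lambda>e. insert (Inr e) (Inl ` e)) ` E"

definition second_largest_modulus :: "complex set \<Rightarrow> real" where
  "second_largest_modulus S =
     (let m = Max (cmod ` S) in Max {r. \<exists>\<mu>\<in>S. r = cmod \<mu> \<and> r < m})"

definition Lambda3 :: "'a set \<Rightarrow> 'a set set \<Rightarrow> real" where
  "Lambda3 V E = second_largest_modulus
      {lam. hg_eigenvalue (power3_vertices V E) (power3_edges E) lam}"

end

theory Submission
  imports Defs "HOL-Analysis.Analysis" "Jordan_Normal_Form.Spectral_Radius"
begin

(*
  A nonzero eigenvalue of the 3-power hypergraph has modulus root 3 (mu^2), where mu is an
  eigenvalue of the signed adjacency matrix of an induced subgraph G[S]; conversely every such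
  mu arises, and 0 is always an eigenvalue. Since |mu| <= rho(G), with equality for the Perron
  root, the second largest modulus is root 3 (R^2) with R the largest |mu| < rho(G).
  If S misses a vertex, |mu| <= rho_V(G), and rho_V(G) < rho(G) because deleting a vertex of a
  connected graph strictly lowers the Perron root. If S = V and the signing is switching
  equivalent to A or -A, then +-mu is an adjacency eigenvalue: nonnegative ones other than rho(G)
  are at most rho_V(G) by interlacing, negative ones are at least lambda_n(G), and for bipartite
  G the spectrum is symmetric. Any other signing has spectral radius below rho(G), which is what
  rho_Gamma(G) measures. Counting switching classes (2^(n-1) of them among 2^m signings) shows
  that trees admit no other signings, and odd unicyclic graphs only the two classes of A and -A.
*)

section \<open>Quadratic forms and eigenvalues of real symmetric matrices\<close>

definition mat_vec :: "'a set \<Rightarrow> ('a \<Rightarrow> 'a \<Rightarrow> real) \<Rightarrow> ('a \<Rightarrow> real) \<Rightarrow> 'a \<Rightarrow> real" where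
  "mat_vec V M x u = (\<Sum>w\<in>V. M u w * x w)"

definition bilin_form :: "'a set \<Rightarrow> ('a \<Rightarrow> 'a \<Rightarrow> real) \<Rightarrow> ('a \<Rightarrow> real) \<Rightarrow> ('a \<Rightarrow> real) \<Rightarrow> real" where
  "bilin_form V M x y = (\<Sum>u\<in>V. \<Sum>w\<in>V. M u w * x u * y w)"

abbreviation quad_form :: "'a set \<Rightarrow> ('a \<Rightarrow> 'a \<Rightarrow> real) \<Rightarrow> ('a \<Rightarrow> real) \<Rightarrow> real" where
  "quad_form V M x \<equiv> bilin_form V M x x"

definition inner_on :: "'a set \<Rightarrow> ('a \<Rightarrow> real) \<Rightarrow> ('a \<Rightarrow> real) \<Rightarrow> real" where
  "inner_on V x y = (\<Sum>u\<in>V. x u * y u)"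

abbreviation sq_norm :: "'a set \<Rightarrow> ('a \<Rightarrow> real) \<Rightarrow> real" where
  "sq_norm V x \<equiv> inner_on V x x"

definition symmetric_on :: "'a set \<Rightarrow> ('a \<Rightarrow> 'a \<Rightarrow> real) \<Rightarrow> bool" where
  "symmetric_on V M \<longleftrightarrow> (\<forall>u\<in>V. \<forall>w\<in>V. M u w = M w u)"

definition real_eigenpair :: "'a set \<Rightarrow> ('a \<Rightarrow> 'a \<Rightarrow> real) \<Rightarrow> real \<Rightarrow> ('a \<Rightarrow> real) \<Rightarrow> bool" where
  "real_eigenpair V M \<mu> z \<longleftrightarrow> (\<exists>u\<in>V. z u \<noteq> 0) \<and> (\<forall>u\<in>V. mat_vec V M z u = \<mu> * z u)"

definition rayleigh_max :: "'a set \<Rightarrow> ('a \<Rightarrow> 'a \<Rightarrow> real) \<Rightarrow> real \<Rightarrow> ('a \<Rightarrow> real) \<Rightarrow> bool" where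
  "rayleigh_max V M L q \<longleftrightarrow> (\<exists>u\<in>V. q u \<noteq> 0) \<and> quad_form V M q = L * sq_norm V q \<and>
     (\<forall>y. quad_form V M y \<le> L * sq_norm V y)"

lemma bilin_form_mat_vec: "bilin_form V M x y = (\<Sum>u\<in>V. x u * mat_vec V M y u)"
  unfolding bilin_form_def mat_vec_def by (simp add: sum_distrib_left mult.assoc mult.left_commute)

lemma bilin_form_commute:
  assumes "symmetric_on V M" shows "bilin_form V M x y = bilin_form V M y x"
proof -
  have "bilin_form V M x y = (\<Sum>w\<in>V. \<Sum>u\<in>V. M u w * x u * y w)"
    unfolding bilin_form_def by (rule sum.swap)
  also have "\<dots> = bilin_form V M y x" unfolding bilin_form_def
    by (intro sum.cong refl) (use assms in \<open>auto simp: symmetric_on_def mult.commute mult.left_commute\<close>)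
  finally show ?thesis .
qed

lemma quad_form_add_scaled:
  assumes "symmetric_on V M"
  shows "quad_form V M (\<lambda>u. x u + t * d u) = quad_form V M x + 2 * t * bilin_form V M x d + t\<^sup>2 * quad_form V M d"
proof -
  have "quad_form V M (\<lambda>u. x u + t * d u)
      = quad_form V M x + t * bilin_form V M x d + t * bilin_form V M d x + t\<^sup>2 * quad_form V M d"
    unfolding bilin_form_def by (simp add: algebra_simps sum.distrib sum_distrib_left power2_eq_square)
  then show ?thesis using bilin_form_commute[OF assms, of d x] by simp
qed

lemma sq_norm_add_scaled:
  "sq_norm V (\<lambda>u. x u + t * d u) = sq_norm V x + 2 * t * inner_on V x d + t\<^sup>2 * sq_norm V d"
  unfolding inner_on_def by (simp add: algebra_simps sum.distrib sum_distrib_left power2_eq_square)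

lemma bilin_form_scale_left: "bilin_form V M (\<lambda>u. k * x u) y = k * bilin_form V M x y"
  unfolding bilin_form_def by (simp add: sum_distrib_left algebra_simps)

lemma bilin_form_scale_right: "bilin_form V M x (\<lambda>u. k * y u) = k * bilin_form V M x y"
  unfolding bilin_form_def by (simp add: sum_distrib_left algebra_simps)

lemma quad_form_scale: "quad_form V M (\<lambda>u. k * x u) = k\<^sup>2 * quad_form V M x"
  unfolding bilin_form_def by (simp add: sum_distrib_left power2_eq_square algebra_simps)

lemma inner_on_scale_left: "inner_on V (\<lambda>u. k * x u) y = k * inner_on V x y"
  unfolding inner_on_def by (simp add: sum_distrib_left algebra_simps)

lemma inner_on_scale_right: "inner_on V x (\<lambda>u. k * y u) = k * inner_on V x y"
  unfolding inner_on_def by (simp add: sum_distrib_left algebra_simps)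

lemma sq_norm_scale: "sq_norm V (\<lambda>u. k * x u) = k\<^sup>2 * sq_norm V x"
  unfolding inner_on_def by (simp add: sum_distrib_left power2_eq_square algebra_simps)

lemma quad_form_cong: "(\<And>u. u \<in> V \<Longrightarrow> x u = y u) \<Longrightarrow> quad_form V M x = quad_form V M y"
  unfolding bilin_form_def by (intro sum.cong refl) auto

lemma quad_form_cong_mat:
  "(\<And>u w. u \<in> V \<Longrightarrow> w \<in> V \<Longrightarrow> M u w = N u w) \<Longrightarrow> quad_form V M y = quad_form V N y"
  unfolding bilin_form_def by (intro sum.cong refl) auto

lemma sq_norm_cong: "(\<And>u. u \<in> V \<Longrightarrow> x u = y u) \<Longrightarrow> sq_norm V x = sq_norm V y"
  unfolding inner_on_def by (intro sum.cong refl) auto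

lemma sq_norm_abs [simp]: "sq_norm V (\<lambda>u. \<bar>x u\<bar>) = sq_norm V x"
  unfolding inner_on_def by (simp add: abs_mult_self_eq)

lemma sq_norm_nonneg: "sq_norm V x \<ge> 0"
  unfolding inner_on_def by (simp add: sum_nonneg)

lemma sq_norm_eq_0_iff: "finite V \<Longrightarrow> sq_norm V x = 0 \<longleftrightarrow> (\<forall>u\<in>V. x u = 0)"
  unfolding inner_on_def by (simp add: sum_nonneg_eq_0_iff)

lemma sq_norm_pos: "finite V \<Longrightarrow> \<exists>u\<in>V. x u \<noteq> 0 \<Longrightarrow> sq_norm V x > 0"
  using sq_norm_nonneg[of V x] sq_norm_eq_0_iff[of V x] by force

lemma real_eigenpair_cong_mat:
  "(\<And>u w. u \<in> V \<Longrightarrow> w \<in> V \<Longrightarrow> M u w = N u w) \<Longrightarrow> real_eigenpair V M \<mu> z \<Longrightarrow> real_eigenpair V N \<mu> z"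
  unfolding real_eigenpair_def mat_vec_def by auto

lemma eq_0_if_linear_quadratic_nonpos:
  fixes a b :: real
  assumes "\<And>t. a * t + b * t\<^sup>2 \<le> 0" shows "a = 0"
proof (rule ccontr)
  assume "a \<noteq> 0"
  define t where "t = a / (\<bar>b\<bar> + 1)"
  have pos: "\<bar>b\<bar> + 1 > 0" by simp
  have "- \<bar>b\<bar> * t\<^sup>2 \<le> b * t\<^sup>2"
    by (rule mult_right_mono) (use abs_ge_minus_self[of b] in auto)
  moreover have "a * t - \<bar>b\<bar> * t\<^sup>2 = t\<^sup>2"
  proof -
    have "t * (\<bar>b\<bar> + 1) = a" unfolding t_def using pos by simp
    then have "a = t * \<bar>b\<bar> + t" by (simp add: algebra_simps)
    then show ?thesis by (simp add: power2_eq_square algebra_simps)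
  qed
  moreover have "t\<^sup>2 > 0" using \<open>a \<noteq> 0\<close> pos unfolding t_def by simp
  ultimately show False using assms[of t] by linarith
qed

lemma rayleigh_max_eigenpair:
  assumes fin: "finite V" and sym: "symmetric_on V M" and max: "rayleigh_max V M L q"
  shows "real_eigenpair V M L q"
proof -
  define r where "r u = mat_vec V M q u - L * q u" for u
  have "2 * (bilin_form V M q r - L * inner_on V q r) * t + (quad_form V M r - L * sq_norm V r) * t\<^sup>2 \<le> 0"
    for t
  proof -
    have "quad_form V M (\<lambda>u. q u + t * r u) \<le> L * sq_norm V (\<lambda>u. q u + t * r u)"
      using max unfolding rayleigh_max_def by blast
    then show ?thesis using max
      unfolding quad_form_add_scaled[OF sym] sq_norm_add_scaled rayleigh_max_def by (simp add: algebra_simps)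
  qed
  from eq_0_if_linear_quadratic_nonpos[OF this] have "bilin_form V M r q - L * inner_on V q r = 0"
    using bilin_form_commute[OF sym, of q r] by simp
  moreover have "bilin_form V M r q - L * inner_on V q r = (\<Sum>u\<in>V. r u * (mat_vec V M q u - L * q u))"
    unfolding bilin_form_mat_vec inner_on_def
    by (simp add: sum_subtractf sum_distrib_left right_diff_distrib mult.commute mult.left_commute)
  moreover have "\<dots> = sq_norm V r" unfolding inner_on_def r_def ..
  ultimately have "sq_norm V r = 0" by simp
  then show ?thesis using max sq_norm_eq_0_iff[OF fin]
    unfolding real_eigenpair_def rayleigh_max_def r_def by simp
qed

lemma quad_form_le_if_unit:
  assumes fin: "finite V" and unit: "\<And>y. sq_norm V y = 1 \<Longrightarrow> quad_form V M y \<le> L"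
  shows "quad_form V M y \<le> L * sq_norm V y"
proof (cases "sq_norm V y = 0")
  case True
  then have "quad_form V M y = quad_form V M (\<lambda>_. 0)"
    using sq_norm_eq_0_iff[OF fin] by (intro quad_form_cong) auto
  then show ?thesis using True by (simp add: bilin_form_def)
next
  case False
  then have pos: "sq_norm V y > 0" using sq_norm_nonneg[of V y] by simp
  define k where "k = 1 / sqrt (sq_norm V y)"
  have k: "k\<^sup>2 * sq_norm V y = 1" unfolding k_def using pos by (simp add: power_divide)
  have "k\<^sup>2 * quad_form V M y \<le> L"
    using unit[of "\<lambda>u. k * y u"] unfolding quad_form_scale sq_norm_scale k by simp
  then have "k\<^sup>2 * quad_form V M y * sq_norm V y \<le> L * sq_norm V y" using pos by (simp add: mult_right_mono)
  then show ?thesis using k by (metis mult.assoc mult.commute mult_1)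
qed

lemma compactin_unit_sphere:
  assumes fin: "finite V"
  defines "X \<equiv> product_topology (\<lambda>_. euclideanreal) V"
  shows "compactin X {x \<in> topspace X. sq_norm V x = 1}"
proof -
  let ?C = "{x \<in> topspace X. sq_norm V x = 1}"
  have "continuous_map X euclideanreal (sq_norm V)"
    unfolding inner_on_def X_def
    by (intro continuous_map_sum continuous_map_real_mult continuous_map_product_projection fin) auto
  then have closed: "closedin X ?C"
    using closedin_continuous_map_preimage[of X euclideanreal "sq_norm V" "{1}"] by simp
  have sub: "?C \<subseteq> PiE V (\<lambda>_. {-1..1})"
  proof
    fix x assume "x \<in> ?C"
    then have x: "x \<in> PiE V (\<lambda>_. UNIV)" "sq_norm V x = 1" unfolding X_def by auto
    have "\<bar>x u\<bar> \<le> 1" if "u \<in> V" for u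
    proof -
      have "(x u)\<^sup>2 \<le> sq_norm V x" unfolding inner_on_def power2_eq_square
        by (rule member_le_sum[OF that _ fin]) auto
      then show ?thesis using x(2) abs_le_square_iff[of "x u" 1] by simp
    qed
    then show "x \<in> PiE V (\<lambda>_. {-1..1})" using x(1) by (auto simp: PiE_def abs_le_iff)
  qed
  have "compactin X (PiE V (\<lambda>_. {-1..1}))"
    unfolding X_def by (subst compactin_PiE) auto
  then show ?thesis using closed_compactin sub closed by blast
qed

lemma rayleigh_max_exists:
  assumes fin: "finite V" and ne: "V \<noteq> {}"
  shows "\<exists>L q. rayleigh_max V M L q"
proof -
  define X where "X = product_topology (\<lambda>_. euclideanreal) V"
  define C where "C = {x \<in> topspace X. sq_norm V x = 1}"
  have "continuous_map X euclideanreal (quad_form V M)"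
    unfolding bilin_form_def X_def
    by (intro continuous_map_sum continuous_map_real_mult continuous_map_product_projection fin
          continuous_map_canonical_const) auto
  then have "compactin euclideanreal (quad_form V M ` C)"
    using image_compactin[OF compactin_unit_sphere[OF fin]] unfolding C_def X_def by blast
  then have compact: "compact (quad_form V M ` C)" by simp
  have C_restrict: "restrict y V \<in> C" if "sq_norm V y = 1" for y
    using that sq_norm_cong[of V "restrict y V" y] unfolding C_def X_def by simp
  obtain u0 where u0: "u0 \<in> V" using ne by auto
  have "sq_norm V (\<lambda>u. if u = u0 then 1 else 0) = 1"
    using fin u0 by (simp add: inner_on_def if_distrib[of "\<lambda>x. x * _"] cong: if_cong)
  then have "quad_form V M ` C \<noteq> {}" using C_restrict by blast
  then obtain q where q: "q \<in> C" "\<And>y. y \<in> C \<Longrightarrow> quad_form V M y \<le> quad_form V M q"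
    using compact_attains_sup[OF compact] by auto
  have "quad_form V M y \<le> quad_form V M q * sq_norm V y" for y
  proof (rule quad_form_le_if_unit[OF fin])
    fix y :: "'a \<Rightarrow> real" assume "sq_norm V y = 1"
    then show "quad_form V M y \<le> quad_form V M q"
      using q(2)[OF C_restrict[OF \<open>sq_norm V y = 1\<close>]] quad_form_cong[of V "restrict y V" y M] by simp
  qed
  moreover have "sq_norm V q = 1" using q(1) unfolding C_def by simp
  then have "\<exists>u\<in>V. q u \<noteq> 0" using sq_norm_eq_0_iff[OF fin, of q] by auto
  ultimately have "rayleigh_max V M (quad_form V M q) q"
    unfolding rayleigh_max_def using \<open>sq_norm V q = 1\<close> by simp
  then show ?thesis by blast
qed

lemma finite_mat_eigenvalues:
  assumes fin: "finite V"
  shows "finite {c. mat_eigenvalue V M c}"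
proof -
  define n where "n = card V"
  obtain f where f: "bij_betw f {0..<n} V" using ex_bij_betw_nat_finite[OF fin] unfolding n_def by blast
  define A where "A = Matrix.mat n n (\<lambda>(i,j). complex_of_real (M (f i) (f j)))"
  have A: "A \<in> carrier_mat n n" unfolding A_def by simp
  have "{c. mat_eigenvalue V M c} \<subseteq> Spectral_Radius.spectrum A"
  proof
    fix c assume "c \<in> {c. mat_eigenvalue V M c}"
    then obtain x w where w: "w \<in> V" "x w \<noteq> 0"
      and eq: "\<And>v. v \<in> V \<Longrightarrow> (\<Sum>u\<in>V. complex_of_real (M v u) * x u) = c * x v"
      unfolding mat_eigenvalue_def by auto
    define v where "v = Matrix.vec n (\<lambda>i. x (f i))"
    obtain i where i: "i < n" "f i = w" using f w(1) unfolding bij_betw_def by auto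
    have vc: "v \<in> carrier_vec n" unfolding v_def by simp
    have "v $ i \<noteq> 0" using i w unfolding v_def by simp
    then have v0: "v \<noteq> 0\<^sub>v n" using i by auto
    have "A *\<^sub>v v = c \<cdot>\<^sub>v v"
    proof (rule eq_vecI)
      show "dim_vec (A *\<^sub>v v) = dim_vec (c \<cdot>\<^sub>v v)" using A vc by simp
      fix k assume "k < dim_vec (c \<cdot>\<^sub>v v)"
      then have k: "k < n" using vc by simp
      have "(A *\<^sub>v v) $ k = (\<Sum>j\<in>{0..<n}. complex_of_real (M (f k) (f j)) * x (f j))"
        using k A unfolding v_def A_def by (simp add: scalar_prod_def)
      also have "\<dots> = (\<Sum>u\<in>V. complex_of_real (M (f k) u) * x u)"
        by (rule sum.reindex_bij_betw[OF f])
      also have "\<dots> = c * x (f k)" using eq f k unfolding bij_betw_def by auto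
      also have "\<dots> = (c \<cdot>\<^sub>v v) $ k" using k unfolding v_def by simp
      finally show "(A *\<^sub>v v) $ k = (c \<cdot>\<^sub>v v) $ k" .
    qed
    then have "eigenvector A v c" unfolding eigenvector_def using vc v0 A by simp
    then show "c \<in> Spectral_Radius.spectrum A" unfolding Spectral_Radius.spectrum_def eigenvalue_def by auto
  qed
  moreover have "finite (Spectral_Radius.spectrum A)" by (rule card_finite_spectrum(1)[OF A])
  ultimately show ?thesis by (rule finite_subset)
qed

lemma finite_real_mat_eigenvalues:
  "finite V \<Longrightarrow> finite {\<mu>. mat_eigenvalue V M (complex_of_real \<mu>)}"
  using finite_vimageI[OF finite_mat_eigenvalues inj_of_real] by (simp add: vimage_def)

lemma mat_eigenvalue_if_real_eigenpair:
  assumes "real_eigenpair V M \<mu> z" shows "mat_eigenvalue V M (complex_of_real \<mu>)"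
proof -
  have "(\<Sum>u\<in>V. complex_of_real (M v u) * complex_of_real (z u)) = complex_of_real \<mu> * complex_of_real (z v)"
    if "v \<in> V" for v
  proof -
    have "(\<Sum>u\<in>V. complex_of_real (M v u) * complex_of_real (z u)) = complex_of_real (mat_vec V M z v)"
      unfolding mat_vec_def by simp
    then show ?thesis using assms that unfolding real_eigenpair_def by simp
  qed
  moreover have "\<exists>v\<in>V. complex_of_real (z v) \<noteq> 0" using assms unfolding real_eigenpair_def by auto
  ultimately show ?thesis
    unfolding mat_eigenvalue_def by (intro exI[of _ "\<lambda>u. complex_of_real (z u)"]) auto
qed

lemma symmetric_mat_eigenvalue_real:
  assumes fin: "finite V" and sym: "symmetric_on V M" and eig: "mat_eigenvalue V M c"
  shows "Im c = 0"
proof -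
  obtain x w where w: "w \<in> V" "x w \<noteq> 0"
    and eq: "\<And>v. v \<in> V \<Longrightarrow> (\<Sum>u\<in>V. complex_of_real (M v u) * x u) = c * x v"
    using eig unfolding mat_eigenvalue_def by auto
  define S where "S = (\<Sum>u\<in>V. \<Sum>v\<in>V. complex_of_real (M u v) * cnj (x u) * x v)"
  define N where "N = (\<Sum>u\<in>V. (cmod (x u))\<^sup>2)"
  have "cnj S = (\<Sum>u\<in>V. \<Sum>v\<in>V. complex_of_real (M u v) * x u * cnj (x v))"
    unfolding S_def by (simp add: cnj_sum)
  also have "\<dots> = (\<Sum>v\<in>V. \<Sum>u\<in>V. complex_of_real (M u v) * x u * cnj (x v))" by (rule sum.swap)
  also have "\<dots> = S" unfolding S_def
    by (intro sum.cong refl) (use sym in \<open>auto simp: symmetric_on_def mult.commute mult.left_commute\<close>)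
  finally have "Im S = 0" by (metis Reals_cnj_iff complex_is_Real_iff)
  have "S = (\<Sum>u\<in>V. cnj (x u) * (\<Sum>v\<in>V. complex_of_real (M u v) * x v))"
    unfolding S_def by (simp add: sum_distrib_left mult.commute mult.left_commute)
  also have "\<dots> = (\<Sum>u\<in>V. c * (cnj (x u) * x u))"
  proof (intro sum.cong refl)
    fix u assume u: "u \<in> V"
    have "cnj (x u) * (\<Sum>v\<in>V. complex_of_real (M u v) * x v) = cnj (x u) * (c * x u)"
      by (simp only: eq[OF u])
    then show "cnj (x u) * (\<Sum>v\<in>V. complex_of_real (M u v) * x v) = c * (cnj (x u) * x u)"
      by (simp add: algebra_simps)
  qed
  also have "\<dots> = c * complex_of_real N"
    unfolding N_def of_real_sum sum_distrib_left
    by (intro sum.cong refl) (simp only: complex_norm_square mult.commute)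
  finally have "Im c * N = 0" using \<open>Im S = 0\<close> by simp
  moreover have "N > 0" unfolding N_def by (rule sum_pos2[OF fin w(1)]) (use w in auto)
  ultimately show ?thesis by simp
qed

lemma symmetric_mat_eigenvalueE:
  assumes fin: "finite V" and sym: "symmetric_on V M" and eig: "mat_eigenvalue V M c"
  obtains \<mu> z where "c = complex_of_real \<mu>" "real_eigenpair V M \<mu> z"
proof -
  have Im: "Im c = 0" by (rule symmetric_mat_eigenvalue_real[OF assms])
  obtain x w where w: "w \<in> V" "x w \<noteq> 0"
    and eq: "\<And>v. v \<in> V \<Longrightarrow> (\<Sum>u\<in>V. complex_of_real (M v u) * x u) = c * x v"
    using eig unfolding mat_eigenvalue_def by auto
  have c: "c = complex_of_real (Re c)" using Im by (simp add: complex_eq_iff)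
  have "mat_vec V M (\<lambda>u. Re (x u)) v = Re c * Re (x v)" "mat_vec V M (\<lambda>u. Im (x u)) v = Re c * Im (x v)"
    if "v \<in> V" for v
    using arg_cong[OF eq[OF that], of Re] arg_cong[OF eq[OF that], of Im] Im
    unfolding mat_vec_def by (simp_all add: Re_sum Im_sum)
  moreover have "Re (x w) \<noteq> 0 \<or> Im (x w) \<noteq> 0" using w(2) by (simp add: complex_eq_iff)
  ultimately have "real_eigenpair V M (Re c) (\<lambda>u. Re (x u)) \<or> real_eigenpair V M (Re c) (\<lambda>u. Im (x u))"
    unfolding real_eigenpair_def using w(1) by auto
  then show ?thesis using c that by blast
qed

lemma norm_le_spec_radius:
  "finite V \<Longrightarrow> mat_eigenvalue V M c \<Longrightarrow> cmod c \<le> spec_radius V M"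
  unfolding spec_radius_def by (rule Max_ge) (use finite_mat_eigenvalues[of V M] in auto)

lemma abs_le_spec_radius:
  "finite V \<Longrightarrow> real_eigenpair V M \<mu> z \<Longrightarrow> \<bar>\<mu>\<bar> \<le> spec_radius V M"
  using norm_le_spec_radius[OF _ mat_eigenvalue_if_real_eigenpair] by fastforce

lemma spec_radius_attained:
  assumes fin: "finite V" and ne: "V \<noteq> {}" and sym: "symmetric_on V M"
  obtains \<mu> z where "real_eigenpair V M \<mu> z" "\<bar>\<mu>\<bar> = spec_radius V M"
proof -
  obtain L q where "rayleigh_max V M L q" using rayleigh_max_exists[OF fin ne] by blast
  then have "mat_eigenvalue V M (complex_of_real L)"
    using rayleigh_max_eigenpair[OF fin sym] mat_eigenvalue_if_real_eigenpair by blast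
  then have "spec_radius V M \<in> cmod ` {c. mat_eigenvalue V M c}"
    unfolding spec_radius_def by (intro Max_in) (use finite_mat_eigenvalues[OF fin, of M] in auto)
  then obtain c where c: "mat_eigenvalue V M c" "spec_radius V M = cmod c" by auto
  from symmetric_mat_eigenvalueE[OF fin sym c(1)] obtain \<mu> z
    where "c = complex_of_real \<mu>" "real_eigenpair V M \<mu> z" .
  then show ?thesis using c(2) that by auto
qed

lemma quad_form_le_spec_radius:
  assumes fin: "finite V" and ne: "V \<noteq> {}" and sym: "symmetric_on V M"
  shows "quad_form V M y \<le> spec_radius V M * sq_norm V y"
proof -
  obtain L q where max: "rayleigh_max V M L q" using rayleigh_max_exists[OF fin ne] by blast
  then have "L \<le> spec_radius V M"
    using abs_le_spec_radius[OF fin rayleigh_max_eigenpair[OF fin sym max]] by simp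
  then have "L * sq_norm V y \<le> spec_radius V M * sq_norm V y" using sq_norm_nonneg by (rule mult_right_mono)
  moreover have "quad_form V M y \<le> L * sq_norm V y" using max unfolding rayleigh_max_def by blast
  ultimately show ?thesis by linarith
qed

lemma eigenvalue_le_dominating_quad_form:
  assumes eig: "real_eigenpair V B \<mu> z" and dom: "\<And>u w. u \<in> V \<Longrightarrow> w \<in> V \<Longrightarrow> \<bar>B u w\<bar> \<le> M u w"
  shows "\<bar>\<mu>\<bar> * sq_norm V z \<le> quad_form V M (\<lambda>u. \<bar>z u\<bar>)"
proof -
  have row: "\<bar>\<mu>\<bar> * \<bar>z u\<bar> \<le> mat_vec V M (\<lambda>u. \<bar>z u\<bar>) u" if u: "u \<in> V" for u
  proof -
    have "\<bar>\<mu>\<bar> * \<bar>z u\<bar> = \<bar>\<Sum>w\<in>V. B u w * z w\<bar>"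
      using eig u unfolding real_eigenpair_def mat_vec_def by (simp add: abs_mult)
    also have "\<dots> \<le> (\<Sum>w\<in>V. \<bar>B u w * z w\<bar>)" by (rule sum_abs)
    also have "\<dots> \<le> mat_vec V M (\<lambda>u. \<bar>z u\<bar>) u"
      unfolding mat_vec_def by (intro sum_mono) (simp add: abs_mult dom u mult_right_mono)
    finally show ?thesis .
  qed
  have "\<bar>\<mu>\<bar> * sq_norm V z = (\<Sum>u\<in>V. \<bar>z u\<bar> * (\<bar>\<mu>\<bar> * \<bar>z u\<bar>))"
    unfolding inner_on_def by (simp add: sum_distrib_left abs_mult_self_eq mult.commute mult.left_commute)
  also have "\<dots> \<le> (\<Sum>u\<in>V. \<bar>z u\<bar> * mat_vec V M (\<lambda>u. \<bar>z u\<bar>) u)"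
    by (intro sum_mono mult_left_mono row) auto
  also have "\<dots> = quad_form V M (\<lambda>u. \<bar>z u\<bar>)" unfolding bilin_form_mat_vec ..
  finally show ?thesis .
qed

lemma bilin_form_eigenpair_right:
  "real_eigenpair V M \<mu> y \<Longrightarrow> bilin_form V M x y = \<mu> * inner_on V x y"
  unfolding bilin_form_mat_vec inner_on_def real_eigenpair_def by (simp add: sum_distrib_left algebra_simps)

lemma quad_form_eigenpair: "real_eigenpair V M \<mu> z \<Longrightarrow> quad_form V M z = \<mu> * sq_norm V z"
  by (rule bilin_form_eigenpair_right)

lemma eigenvectors_orthogonal:
  assumes sym: "symmetric_on V M" and x: "real_eigenpair V M \<mu> x" and y: "real_eigenpair V M \<nu> y"
    and ne: "\<mu> \<noteq> \<nu>"
  shows "inner_on V x y = 0"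
proof -
  have "\<nu> * inner_on V x y = \<mu> * inner_on V y x"
    using bilin_form_eigenpair_right[OF y, of x] bilin_form_eigenpair_right[OF x, of y]
      bilin_form_commute[OF sym, of x y] by simp
  moreover have "inner_on V y x = inner_on V x y" unfolding inner_on_def by (simp add: mult.commute)
  ultimately show ?thesis using ne by simp
qed

lemma rayleigh_max_abs:
  assumes nonneg: "\<And>u w. M u w \<ge> 0" and max: "rayleigh_max V M L q"
  shows "rayleigh_max V M L (\<lambda>u. \<bar>q u\<bar>)"
proof -
  have "quad_form V M q \<le> quad_form V M (\<lambda>u. \<bar>q u\<bar>)"
    unfolding bilin_form_def
  proof (intro sum_mono)
    fix u w
    show "M u w * q u * q w \<le> M u w * \<bar>q u\<bar> * \<bar>q w\<bar>"
      using nonneg[of u w] by (simp add: mult.assoc mult_left_mono abs_mult[symmetric])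
  qed
  moreover have "quad_form V M (\<lambda>u. \<bar>q u\<bar>) \<le> L * sq_norm V (\<lambda>u. \<bar>q u\<bar>)"
    using max unfolding rayleigh_max_def by blast
  ultimately have "quad_form V M (\<lambda>u. \<bar>q u\<bar>) = L * sq_norm V (\<lambda>u. \<bar>q u\<bar>)"
    using max unfolding rayleigh_max_def by simp
  then show ?thesis using max unfolding rayleigh_max_def by simp
qed

lemma quad_form_remove_zero:
  assumes "finite V" "v \<in> V" "y v = 0"
  shows "quad_form V M y = quad_form (V - {v}) M y"
proof -
  have drop: "sum f V = sum f (V - {v})" if "f v = 0" for f :: "'a \<Rightarrow> real"
    using assms that by (simp add: sum.remove)
  have "quad_form V M y = (\<Sum>u\<in>V - {v}. \<Sum>w\<in>V. M u w * y u * y w)"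
    unfolding bilin_form_def by (rule drop) (simp add: assms)
  also have "\<dots> = quad_form (V - {v}) M y"
    unfolding bilin_form_def by (intro sum.cong refl drop) (simp add: assms)
  finally show ?thesis .
qed

lemma sq_norm_remove_zero:
  "finite V \<Longrightarrow> v \<in> V \<Longrightarrow> y v = 0 \<Longrightarrow> sq_norm V y = sq_norm (V - {v}) y"
  unfolding inner_on_def by (simp add: sum.remove)

section \<open>The Perron root of a connected graph\<close>

lemma symmetric_on_adj: "symmetric_on V (adj E)"
  unfolding symmetric_on_def adj_def by (simp add: insert_commute)

lemma symmetric_on_signed_adj: "symmetric_on V (signed_adj E c)"
  unfolding symmetric_on_def signed_adj_def by (simp add: insert_commute)

lemma adj_nonneg: "adj E u v \<ge> 0"
  unfolding adj_def by simp

definition signing :: "'a set set \<Rightarrow> ('a set \<Rightarrow> real) \<Rightarrow> bool" where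
  "signing E c \<longleftrightarrow> (\<forall>e\<in>E. c e = 1 \<or> c e = -1)"

lemma abs_signed_adj_le_adj: "signing E c \<Longrightarrow> \<bar>signed_adj E c u v\<bar> \<le> adj E u v"
  unfolding signing_def signed_adj_def adj_def by auto

lemma signed_adj_one: "signed_adj E (\<lambda>_. 1) = adj E"
  unfolding signed_adj_def adj_def by (intro ext) auto

lemma signed_adj_restrict: "signed_adj E (restrict c E) = signed_adj E c"
  unfolding signed_adj_def by (intro ext) auto

lemma eq_times_sgn_if_mult_eq_abs:
  fixes c \<sigma> a :: real
  assumes "c * \<sigma> * a = \<bar>a\<bar>" "a \<noteq> 0" "\<sigma> * \<sigma> = 1"
  shows "c = \<sigma> * sgn a"
proof -
  have "c * \<sigma> * a = sgn a * a" using assms(1) by (simp add: abs_sgn mult.commute)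
  then have "c * \<sigma> = sgn a" using assms(2) by simp
  then have "c * (\<sigma> * \<sigma>) = \<sigma> * sgn a" by (metis mult.assoc mult.commute)
  then show ?thesis using assms(3) by simp
qed

locale connected_graph =
  fixes V :: "'a set" and E :: "'a set set"
  assumes simple: "simple_graph V E" and connected: "graph_connected V E"
    and edges_nonempty: "E \<noteq> {}"
begin

abbreviation rho :: real where "rho \<equiv> graph_rho V E"

lemma finite_V: "finite V"
  using simple unfolding simple_graph_def by simp

lemma edgeE:
  assumes "e \<in> E"
  obtains u v where "u \<in> V" "v \<in> V" "u \<noteq> v" "e = {u, v}"
  using simple assms unfolding simple_graph_def by blast

lemma edge_vertices:
  assumes "{u, v} \<in> E" shows "u \<in> V" "v \<in> V" "u \<noteq> v"
proof -
  obtain a b where "a \<in> V" "b \<in> V" "a \<noteq> b" "{u, v} = {a, b}" by (rule edgeE[OF assms])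
  then show "u \<in> V" "v \<in> V" "u \<noteq> v" by (auto simp: doubleton_eq_iff)
qed

lemma finite_E: "finite E"
proof -
  have "E \<subseteq> Pow V" by (auto elim: edgeE)
  then show ?thesis using finite_V by (meson finite_Pow_iff finite_subset)
qed

lemma adj_self: "adj E u u = 0"
  unfolding adj_def using edge_vertices(3)[of u u] by auto

lemma some_edge: obtains a b where "a \<in> V" "b \<in> V" "a \<noteq> b" "{a, b} \<in> E"
proof -
  obtain e where e: "e \<in> E" using edges_nonempty by blast
  then obtain u v where "u \<in> V" "v \<in> V" "u \<noteq> v" "e = {u, v}" by (rule edgeE)
  then show ?thesis using that e by blast
qed

lemma V_minus_nonempty: "V - {v} \<noteq> {}"
proof -
  obtain a b where "a \<in> V" "b \<in> V" "a \<noteq> b" by (rule some_edge)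
  then show ?thesis by blast
qed

lemma V_nonempty: "V \<noteq> {}"
  using V_minus_nonempty by blast

lemma reachable_all:
  assumes "u \<in> V" "v \<in> V" shows "(u, v) \<in> {(a, b). {a, b} \<in> E}\<^sup>*"
  using connected assms unfolding graph_connected_def by blast

lemma quad_form_adj_two_vertices:
  fixes t :: real
  assumes ab: "a \<in> V" "b \<in> V" "a \<noteq> b" "{a, b} \<in> E"
  defines "y \<equiv> \<lambda>u. (if u = a then 1 else 0) + (if u = b then t else (0::real))"
  shows "quad_form V (adj E) y = 2 * t" "sq_norm V y = 1 + t\<^sup>2"
proof -
  have "mat_vec V (adj E) y u = adj E u a + t * adj E u b" for u
    unfolding mat_vec_def y_def using ab finite_V
    by (simp add: sum.distrib distrib_left if_distrib[of "\<lambda>x. _ * x"] cong: if_cong)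
  then have "quad_form V (adj E) y = (\<Sum>u\<in>V. y u * (adj E u a + t * adj E u b))"
    unfolding bilin_form_mat_vec by simp
  also have "\<dots> = (adj E a a + t * adj E a b) + t * (adj E b a + t * adj E b b)"
    unfolding y_def using ab finite_V
    by (simp add: sum.distrib distrib_right if_distrib[of "\<lambda>x. x * _"] cong: if_cong)
  also have "\<dots> = 2 * t" using ab(4) adj_self by (simp add: adj_def insert_commute)
  finally show "quad_form V (adj E) y = 2 * t" .
  show "sq_norm V y = 1 + t\<^sup>2" unfolding inner_on_def y_def using ab finite_V
    by (simp add: sum.distrib distrib_right distrib_left if_distrib[of "\<lambda>x. x * _"] power2_eq_square
        cong: if_cong)
qed

lemma rayleigh_max_rho: obtains p where "rayleigh_max V (adj E) rho p"
proof -
  obtain L p where max: "rayleigh_max V (adj E) L p" using rayleigh_max_exists[OF finite_V V_nonempty] by blast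
  have L_le: "L \<le> rho"
    using abs_le_spec_radius[OF finite_V rayleigh_max_eigenpair[OF finite_V symmetric_on_adj max]]
    unfolding graph_rho_def by simp
  obtain \<mu> z where z: "real_eigenpair V (adj E) \<mu> z" "\<bar>\<mu>\<bar> = rho"
    using spec_radius_attained[OF finite_V V_nonempty symmetric_on_adj] unfolding graph_rho_def by blast
  have "\<bar>\<mu>\<bar> * sq_norm V z \<le> quad_form V (adj E) (\<lambda>u. \<bar>z u\<bar>)"
    by (rule eigenvalue_le_dominating_quad_form[OF z(1)]) (simp add: adj_nonneg)
  also have "\<dots> \<le> L * sq_norm V (\<lambda>u. \<bar>z u\<bar>)" using max unfolding rayleigh_max_def by blast
  finally have "\<bar>\<mu>\<bar> * sq_norm V z \<le> L * sq_norm V z" by simp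
  moreover have "sq_norm V z > 0" using z(1) sq_norm_pos[OF finite_V] unfolding real_eigenpair_def by blast
  ultimately have "rho \<le> L" using z(2) by (metis mult_right_le_imp_le)
  then show ?thesis using L_le max that by simp
qed

lemma quad_form_adj_le_rho: "quad_form V (adj E) y \<le> rho * sq_norm V y"
proof -
  obtain p where "rayleigh_max V (adj E) rho p" by (rule rayleigh_max_rho)
  then show ?thesis unfolding rayleigh_max_def by blast
qed

lemma rho_ge_1: "rho \<ge> 1"
proof -
  obtain a b where ab: "a \<in> V" "b \<in> V" "a \<noteq> b" "{a, b} \<in> E" by (rule some_edge)
  show ?thesis
    using quad_form_adj_two_vertices[OF ab, of 1] quad_form_adj_le_rho[of "\<lambda>u. (if u = a then 1 else 0) + (if u = b then 1 else 0)"]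
    by simp
qed

lemma abs_eigenvalue_le_rho:
  assumes eig: "real_eigenpair V B \<mu> z" and dom: "\<And>u w. u \<in> V \<Longrightarrow> w \<in> V \<Longrightarrow> \<bar>B u w\<bar> \<le> adj E u w"
  shows "\<bar>\<mu>\<bar> \<le> rho"
proof -
  have "\<bar>\<mu>\<bar> * sq_norm V z \<le> quad_form V (adj E) (\<lambda>u. \<bar>z u\<bar>)"
    by (rule eigenvalue_le_dominating_quad_form[OF eig dom])
  also have "\<dots> \<le> rho * sq_norm V (\<lambda>u. \<bar>z u\<bar>)" by (rule quad_form_adj_le_rho)
  finally have "\<bar>\<mu>\<bar> * sq_norm V z \<le> rho * sq_norm V z" by simp
  moreover have "sq_norm V z > 0" using eig sq_norm_pos[OF finite_V] unfolding real_eigenpair_def by blast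
  ultimately show ?thesis by (metis mult_right_le_imp_le)
qed

lemma rayleigh_max_adj_nonzero:
  assumes max: "rayleigh_max V (adj E) L q" and u: "u \<in> V"
  shows "q u \<noteq> 0"
proof
  assume "q u = 0"
  define a where "a v = \<bar>q v\<bar>" for v
  have max_a: "rayleigh_max V (adj E) L a"
    unfolding a_def by (rule rayleigh_max_abs[OF adj_nonneg max])
  have eig: "real_eigenpair V (adj E) L a"
    by (rule rayleigh_max_eigenpair[OF finite_V symmetric_on_adj max_a])
  have "(u, v) \<in> {(x, y). {x, y} \<in> E}\<^sup>* \<Longrightarrow> a v = 0" for v
  proof (induction rule: rtrancl_induct)
    case base
    then show ?case using \<open>q u = 0\<close> unfolding a_def by simp
  next
    case (step x y)
    then have xy: "{x, y} \<in> E" by simp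
    have "a y = adj E x y * a y" using xy unfolding adj_def by simp
    also have "\<dots> \<le> mat_vec V (adj E) a x" unfolding mat_vec_def
      by (rule member_le_sum[OF edge_vertices(2)[OF xy] _ finite_V]) (simp add: a_def adj_nonneg)
    also have "\<dots> = 0" using eig edge_vertices(1)[OF xy] step.IH unfolding real_eigenpair_def by simp
    finally show ?case unfolding a_def by simp
  qed
  then show False using max_a reachable_all[OF u] unfolding rayleigh_max_def by blast
qed

lemma nonzero_if_quad_form_ge_rho:
  assumes "\<exists>w\<in>V. y w \<noteq> 0" "rho * sq_norm V y \<le> quad_form V (adj E) y" "u \<in> V"
  shows "y u \<noteq> 0"
proof -
  have "rayleigh_max V (adj E) rho y"
    unfolding rayleigh_max_def using assms quad_form_adj_le_rho by (simp add: antisym)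
  then show ?thesis using rayleigh_max_adj_nonzero assms(3) by blast
qed

lemma adj_delete_vertex:
  "u \<noteq> v \<Longrightarrow> w \<noteq> v \<Longrightarrow> adj {e\<in>E. v \<notin> e} u w = adj E u w"
  unfolding adj_def by auto

lemma graph_rho_delete_le_rho_V:
  "v \<in> V \<Longrightarrow> graph_rho (V - {v}) {e\<in>E. v \<notin> e} \<le> rho_V V E"
  unfolding rho_V_def by (rule Max_ge) (use finite_V in auto)

lemma rho_V_attained:
  obtains v where "v \<in> V" "rho_V V E = graph_rho (V - {v}) {e\<in>E. v \<notin> e}"
proof -
  have "rho_V V E \<in> (\<lambda>v. graph_rho (V - {v}) {e\<in>E. v \<notin> e}) ` V"
    unfolding rho_V_def by (rule Max_in) (use finite_V V_nonempty in auto)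
  then show ?thesis using that by blast
qed

lemma quad_form_adj_le_rho_V:
  assumes v: "v \<in> V" and y: "y v = 0"
  shows "quad_form V (adj E) y \<le> rho_V V E * sq_norm V y"
proof -
  let ?W = "V - {v}" and ?F = "{e\<in>E. v \<notin> e}"
  have "quad_form V (adj E) y = quad_form ?W (adj E) y" by (rule quad_form_remove_zero[where y=y, OF finite_V v y])
  also have "\<dots> = quad_form ?W (adj ?F) y" by (rule quad_form_cong_mat) (simp add: adj_delete_vertex)
  also have "\<dots> \<le> graph_rho ?W ?F * sq_norm ?W y"
    unfolding graph_rho_def
    by (rule quad_form_le_spec_radius) (use finite_V V_minus_nonempty symmetric_on_adj in auto)
  also have "sq_norm ?W y = sq_norm V y" by (rule sq_norm_remove_zero[where y=y, OF finite_V v y, symmetric])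
  also have "graph_rho ?W ?F * sq_norm V y \<le> rho_V V E * sq_norm V y"
    by (rule mult_right_mono[OF graph_rho_delete_le_rho_V[OF v] sq_norm_nonneg])
  finally show ?thesis .
qed

lemma graph_rho_delete_less_rho:
  assumes v: "v \<in> V" shows "graph_rho (V - {v}) {e\<in>E. v \<notin> e} < rho"
proof (rule ccontr)
  let ?W = "V - {v}" and ?F = "{e\<in>E. v \<notin> e}"
  assume "\<not> graph_rho ?W ?F < rho"
  obtain \<mu> z where z: "real_eigenpair ?W (adj ?F) \<mu> z" "\<bar>\<mu>\<bar> = graph_rho ?W ?F"
    using spec_radius_attained[OF finite_Diff[OF finite_V] V_minus_nonempty symmetric_on_adj]
    unfolding graph_rho_def by blast
  define y where "y u = (if u \<in> ?W then \<bar>z u\<bar> else 0)" for u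
  have yv: "y v = 0" unfolding y_def by simp
  have "sq_norm V y = sq_norm ?W y" by (rule sq_norm_remove_zero[where y=y, OF finite_V v yv])
  also have "\<dots> = sq_norm ?W z" unfolding inner_on_def by (intro sum.cong refl) (simp add: y_def abs_mult_self_eq)
  finally have norm_y: "sq_norm V y = sq_norm ?W z" .
  have "rho * sq_norm V y \<le> \<bar>\<mu>\<bar> * sq_norm ?W z"
    unfolding norm_y using \<open>\<not> graph_rho ?W ?F < rho\<close> z(2)
    by (intro mult_right_mono) (simp_all add: sq_norm_nonneg)
  also have "\<dots> \<le> quad_form ?W (adj ?F) (\<lambda>u. \<bar>z u\<bar>)"
    by (rule eigenvalue_le_dominating_quad_form[OF z(1)]) (simp add: adj_nonneg)
  also have "\<dots> = quad_form ?W (adj ?F) y" by (rule quad_form_cong) (simp add: y_def)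
  also have "\<dots> = quad_form ?W (adj E) y" by (rule quad_form_cong_mat) (simp add: adj_delete_vertex)
  also have "\<dots> = quad_form V (adj E) y" by (rule quad_form_remove_zero[where y=y, OF finite_V v yv, symmetric])
  finally have "rho * sq_norm V y \<le> quad_form V (adj E) y" .
  moreover have "\<exists>w\<in>V. y w \<noteq> 0" using z(1) unfolding real_eigenpair_def y_def by auto
  ultimately have "y v \<noteq> 0" using nonzero_if_quad_form_ge_rho v by blast
  then show False using yv by simp
qed

lemma rho_V_less_rho: "rho_V V E < rho"
proof -
  obtain v where "v \<in> V" "rho_V V E = graph_rho (V - {v}) {e\<in>E. v \<notin> e}" by (rule rho_V_attained)
  then show ?thesis using graph_rho_delete_less_rho by simp
qed

lemma rho_V_nonneg: "rho_V V E \<ge> 0"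
proof -
  obtain v where v: "v \<in> V" using V_nonempty by blast
  obtain \<mu> z where "\<bar>\<mu>\<bar> = graph_rho (V - {v}) {e\<in>E. v \<notin> e}"
    using spec_radius_attained[OF finite_Diff[OF finite_V] V_minus_nonempty symmetric_on_adj]
    unfolding graph_rho_def by blast
  then show ?thesis using graph_rho_delete_le_rho_V[OF v] by linarith
qed

text \<open>Interlacing: a combination of an eigenvector with the Perron vector that vanishes at one
  vertex has Rayleigh quotient at least the eigenvalue.\<close>

lemma eigenvalue_le_rho_V:
  assumes z: "real_eigenpair V (adj E) \<nu> z" and ne: "\<nu> \<noteq> rho"
  shows "\<nu> \<le> rho_V V E"
proof -
  obtain p where max: "rayleigh_max V (adj E) rho p" by (rule rayleigh_max_rho)
  have p: "real_eigenpair V (adj E) rho p" by (rule rayleigh_max_eigenpair[OF finite_V symmetric_on_adj max])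
  have orth: "inner_on V z p = 0" by (rule eigenvectors_orthogonal[OF symmetric_on_adj z p ne])
  obtain v where v: "v \<in> V" using V_nonempty by blast
  have pv: "p v \<noteq> 0" by (rule rayleigh_max_adj_nonzero[OF max v])
  define w where "w u = p v * z u + (- z v) * p u" for u
  have wv: "w v = 0" unfolding w_def by simp
  have quad_w: "quad_form V (adj E) w = (p v)\<^sup>2 * (\<nu> * sq_norm V z) + (z v)\<^sup>2 * (rho * sq_norm V p)"
    unfolding w_def quad_form_add_scaled[OF symmetric_on_adj] bilin_form_scale_left bilin_form_scale_right
      bilin_form_eigenpair_right[OF p] quad_form_eigenpair[OF z] orth
    by (simp add: power2_eq_square)
  have norm_w: "sq_norm V w = (p v)\<^sup>2 * sq_norm V z + (z v)\<^sup>2 * sq_norm V p"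
    unfolding w_def sq_norm_add_scaled inner_on_scale_left inner_on_scale_right orth by (simp add: power2_eq_square)
  have "\<bar>\<nu>\<bar> \<le> rho" by (rule abs_eigenvalue_le_rho[OF z]) (simp add: adj_nonneg)
  then have "\<nu> * ((z v)\<^sup>2 * sq_norm V p) \<le> rho * ((z v)\<^sup>2 * sq_norm V p)"
    by (intro mult_right_mono) (simp_all add: sq_norm_nonneg)
  then have "\<nu> * sq_norm V w \<le> quad_form V (adj E) w" unfolding quad_w norm_w by (simp add: algebra_simps)
  also have "\<dots> \<le> rho_V V E * sq_norm V w" by (rule quad_form_adj_le_rho_V[where y=w, OF v wv])
  finally have "\<nu> * sq_norm V w \<le> rho_V V E * sq_norm V w" .
  moreover have "sq_norm V z > 0" using z sq_norm_pos[OF finite_V] unfolding real_eigenpair_def by blast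
  then have "sq_norm V w > 0"
    unfolding norm_w using pv by (intro add_pos_nonneg) (simp_all add: sq_norm_nonneg)
  ultimately show ?thesis by (metis mult_right_le_imp_le)
qed

text \<open>Equality in \<open>\<bar>z\<^sup>T B z\<bar> \<le> \<bar>z\<bar>\<^sup>T A \<bar>z\<bar> \<le> \<rho> \<parallel>z\<parallel>\<^sup>2\<close> forces \<open>\<bar>z\<bar>\<close> to be a Perron vector
  and every edge term \<open>c e * z u * z v\<close> to have the sign of \<open>\<mu>\<close>.\<close>

lemma eigenvalue_abs_eq_rho_signing:
  assumes c: "signing E c" and z: "real_eigenpair V (signed_adj E c) \<mu> z" and abs: "\<bar>\<mu>\<bar> = rho"
  shows "\<forall>u\<in>V. z u \<noteq> 0" "\<forall>e\<in>E. c e = sgn \<mu> * (\<Prod>w\<in>e. sgn (z w))"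
proof -
  let ?A = "adj E" and ?B = "signed_adj E c" and ?a = "\<lambda>u. \<bar>z u\<bar>"
  define \<sigma> where "\<sigma> = sgn \<mu>"
  have \<mu>: "\<mu> \<noteq> 0" using abs rho_ge_1 by auto
  have \<sigma>: "\<sigma> * \<mu> = rho" "\<sigma> * \<sigma> = 1" "\<bar>\<sigma>\<bar> = 1"
    using abs \<mu> unfolding \<sigma>_def by (auto simp: sgn_if)
  define t where "t u w = ?A u w * ?a u * ?a w - \<sigma> * (?B u w * z u * z w)" for u w
  have t_nonneg: "t u w \<ge> 0" for u w
  proof -
    have "\<sigma> * (?B u w * z u * z w) \<le> \<bar>?B u w\<bar> * ?a u * ?a w"
      using abs_ge_self[of "\<sigma> * (?B u w * z u * z w)"] \<sigma>(3) by (simp add: abs_mult)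
    also have "\<dots> \<le> ?A u w * ?a u * ?a w"
      using abs_signed_adj_le_adj[OF c] by (simp add: mult_right_mono)
    finally show ?thesis unfolding t_def by simp
  qed
  have "(\<Sum>u\<in>V. \<Sum>w\<in>V. t u w) = quad_form V ?A ?a - \<sigma> * quad_form V ?B z"
    unfolding t_def bilin_form_def by (simp add: sum_subtractf sum_distrib_left)
  also have "\<sigma> * quad_form V ?B z = rho * sq_norm V ?a"
    using quad_form_eigenpair[OF z] \<sigma>(1) by simp
  finally have sum_t: "(\<Sum>u\<in>V. \<Sum>w\<in>V. t u w) = quad_form V ?A ?a - rho * sq_norm V ?a" .
  have sum_t_nonneg: "(\<Sum>u\<in>V. \<Sum>w\<in>V. t u w) \<ge> 0" by (intro sum_nonneg t_nonneg)
  have ge: "rho * sq_norm V ?a \<le> quad_form V ?A ?a" using sum_t sum_t_nonneg by linarith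
  have ex: "\<exists>w\<in>V. ?a w \<noteq> 0" using z unfolding real_eigenpair_def by auto
  show nonzero: "\<forall>u\<in>V. z u \<noteq> 0"
  proof
    fix u assume "u \<in> V"
    from nonzero_if_quad_form_ge_rho[OF ex ge this] show "z u \<noteq> 0" by simp
  qed
  have "(\<Sum>u\<in>V. \<Sum>w\<in>V. t u w) = 0"
    using sum_t sum_t_nonneg quad_form_adj_le_rho[of ?a] by linarith
  then have t0: "t u w = 0" if "u \<in> V" "w \<in> V" for u w
    using that finite_V t_nonneg by (simp add: sum_nonneg_eq_0_iff sum_nonneg)
  show "\<forall>e\<in>E. c e = sgn \<mu> * (\<Prod>w\<in>e. sgn (z w))"
  proof
    fix e assume e: "e \<in> E"
    then obtain u v where uv: "u \<in> V" "v \<in> V" "u \<noteq> v" "e = {u, v}" by (rule edgeE)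
    have "?A u v = 1" "?B u v = c e" using e uv(4) unfolding adj_def signed_adj_def by auto
    then have "c e * \<sigma> * (z u * z v) = \<bar>z u * z v\<bar>"
      using t0[OF uv(1,2)] unfolding t_def by (simp add: abs_mult algebra_simps)
    then have "c e = \<sigma> * sgn (z u * z v)"
      by (rule eq_times_sgn_if_mult_eq_abs) (use nonzero uv \<sigma>(2) in auto)
    then show "c e = sgn \<mu> * (\<Prod>w\<in>e. sgn (z w))" using uv unfolding \<sigma>_def by (simp add: sgn_mult)
  qed
qed

lemma switching_eigenpair:
  assumes s: "\<forall>u\<in>V. s u = 1 \<or> s u = -1" and \<sigma>: "\<sigma> = 1 \<or> \<sigma> = -1"
    and c: "\<forall>e\<in>E. c e = \<sigma> * (\<Prod>w\<in>e. s w)" and z: "real_eigenpair V (signed_adj E c) \<mu> z"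
  shows "real_eigenpair V (adj E) (\<sigma> * \<mu>) (\<lambda>u. s u * z u)"
proof -
  have B: "signed_adj E c u w = \<sigma> * s u * s w * adj E u w" if "u \<in> V" "w \<in> V" for u w
  proof (cases "{u, w} \<in> E")
    case True
    then have "u \<noteq> w" by (rule edge_vertices)
    then show ?thesis using True c unfolding signed_adj_def adj_def by (simp add: mult.assoc)
  qed (simp add: signed_adj_def adj_def)
  have "mat_vec V (adj E) (\<lambda>u. s u * z u) u = \<sigma> * \<mu> * (s u * z u)" if u: "u \<in> V" for u
  proof -
    have "s u * mat_vec V (signed_adj E c) z u = \<sigma> * (s u * s u) * mat_vec V (adj E) (\<lambda>u. s u * z u) u"
      unfolding mat_vec_def using B u by (simp add: sum_distrib_left algebra_simps)
    then have "\<sigma> * (s u * (\<mu> * z u)) = (\<sigma> * \<sigma>) * mat_vec V (adj E) (\<lambda>u. s u * z u) u"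
      using z u s unfolding real_eigenpair_def by (auto simp: algebra_simps)
    then show ?thesis using \<sigma> by (auto simp: algebra_simps)
  qed
  moreover have "\<exists>u\<in>V. s u * z u \<noteq> 0" using z s unfolding real_eigenpair_def by force
  ultimately show ?thesis unfolding real_eigenpair_def by simp
qed

end

section \<open>Switching classes of signings\<close>

lemma card_sign_vectors_fixed_at:
  assumes fin: "finite V" and v0: "v0 \<in> V"
  shows "card (PiE V (\<lambda>u. if u = v0 then {1} else {-1, 1::real})) = 2 ^ (card V - 1)"
proof -
  have "card (PiE V (\<lambda>u. if u = v0 then {1} else {-1, 1::real}))
      = (\<Prod>u\<in>V. card (if u = v0 then {1} else {-1, 1::real}))"
    by (rule card_PiE[OF fin])
  also have "\<dots> = (\<Prod>u\<in>V. if u = v0 then 1 else 2)" by (intro prod.cong refl) auto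
  also have "\<dots> = (\<Prod>u\<in>V - {v0}. if u = v0 then 1 else (2::nat))"
    using prod.remove[OF fin v0, of "\<lambda>u. if u = v0 then 1 else (2::nat)"] by simp
  also have "\<dots> = (\<Prod>u\<in>V - {v0}. 2)" by (rule prod.cong) auto
  also have "\<dots> = 2 ^ (card V - 1)" using fin v0 by (simp add: card_Diff_singleton)
  finally show ?thesis .
qed

context connected_graph
begin

definition switchings :: "('a \<Rightarrow> real) set" where
  "switchings = PiE V (\<lambda>_. {-1, 1})"

definition signings :: "('a set \<Rightarrow> real) set" where
  "signings = PiE E (\<lambda>_. {-1, 1})"

definition signing_of :: "('a \<Rightarrow> real) \<Rightarrow> 'a set \<Rightarrow> real" where
  "signing_of s = restrict (\<lambda>e. \<Prod>w\<in>e. s w) E"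

definition negate :: "('a set \<Rightarrow> real) \<Rightarrow> 'a set \<Rightarrow> real" where
  "negate c = restrict (\<lambda>e. - c e) E"

abbreviation balanced :: "('a set \<Rightarrow> real) set" where
  "balanced \<equiv> signing_of ` switchings"

abbreviation antibalanced :: "('a set \<Rightarrow> real) set" where
  "antibalanced \<equiv> negate ` balanced"

lemma switching_values: "s \<in> switchings \<Longrightarrow> u \<in> V \<Longrightarrow> s u = 1 \<or> s u = -1"
  unfolding switchings_def by auto

lemma restrict_in_signings_iff: "restrict c E \<in> signings \<longleftrightarrow> signing E c"
  unfolding signings_def signing_def by auto

lemma signing_if_in_signings: "c \<in> signings \<Longrightarrow> signing E c"
  unfolding signings_def signing_def by auto

lemma restrict_eq_signing_of_iff:
  "restrict c E = signing_of s \<longleftrightarrow> (\<forall>e\<in>E. c e = (\<Prod>w\<in>e. s w))"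
  unfolding signing_of_def by (metis restrict_apply' restrict_ext)

lemma restrict_eq_negate_iff:
  "restrict c E = negate (signing_of s) \<longleftrightarrow> (\<forall>e\<in>E. c e = - (\<Prod>w\<in>e. s w))"
  unfolding signing_of_def negate_def by (auto simp: restrict_def fun_eq_iff)

lemma signing_of_in_signings: "s \<in> switchings \<Longrightarrow> signing_of s \<in> signings"
proof -
  assume s: "s \<in> switchings"
  have "(\<Prod>w\<in>e. s w) \<in> {-1, 1}" if e: "e \<in> E" for e
  proof -
    obtain u v where uv: "u \<in> V" "v \<in> V" "u \<noteq> v" "e = {u, v}" using e by (rule edgeE)
    then show ?thesis using switching_values[OF s uv(1)] switching_values[OF s uv(2)] by auto
  qed
  then show ?thesis unfolding signing_of_def signings_def by auto
qed

lemma balanced_subset_signings: "balanced \<subseteq> signings"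
  using signing_of_in_signings by auto

lemma finite_signings: "finite signings"
  unfolding signings_def using finite_E by (simp add: finite_PiE)

lemma card_signings: "card signings = 2 ^ card E"
  unfolding signings_def using finite_E by (simp add: card_PiE numeral_2_eq_2)

lemma switching_mult:
  assumes "s \<in> switchings" "s' \<in> switchings"
  shows "restrict (\<lambda>u. s u * s' u) V \<in> switchings"
proof -
  have "s u * s' u \<in> {-1, 1}" if "u \<in> V" for u
    using switching_values[OF assms(1) that] switching_values[OF assms(2) that] by auto
  then show ?thesis unfolding switchings_def by auto
qed

lemma switching_eq_if_signing_of_eq:
  assumes s: "s \<in> switchings" and s': "s' \<in> switchings" and eq: "signing_of s = signing_of s'"
    and v0: "v0 \<in> V" "s v0 = s' v0"
  shows "s = s'"
proof -
  have "(v0, v) \<in> {(x, y). {x, y} \<in> E}\<^sup>* \<Longrightarrow> s v = s' v" for v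
  proof (induction rule: rtrancl_induct)
    case base
    then show ?case using v0 by simp
  next
    case (step x y)
    then have xy: "{x, y} \<in> E" by simp
    have "signing_of s {x, y} = signing_of s' {x, y}" using eq by simp
    then have "s x * s y = s' x * s' y" using xy edge_vertices(3)[OF xy] unfolding signing_of_def by simp
    moreover have "s x \<noteq> 0" using switching_values[OF s edge_vertices(1)[OF xy]] by auto
    ultimately show ?case using step.IH by simp
  qed
  then have "\<forall>v\<in>V. s v = s' v" using reachable_all[OF v0(1)] by blast
  then show ?thesis using s s' unfolding switchings_def by (auto intro: PiE_ext)
qed

lemma card_balanced: "card balanced = 2 ^ (card V - 1)"
proof -
  obtain v0 where v0: "v0 \<in> V" using V_nonempty by blast
  define S1 where "S1 = PiE V (\<lambda>u. if u = v0 then {1} else {-1, 1::real})"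
  have S1_sub: "S1 \<subseteq> switchings" unfolding S1_def switchings_def by (auto simp: PiE_def Pi_def)
  have "balanced \<subseteq> signing_of ` S1"
  proof
    fix c assume "c \<in> balanced"
    then obtain s where s: "s \<in> switchings" "c = signing_of s" by auto
    show "c \<in> signing_of ` S1"
    proof (cases "s v0 = 1")
      case True
      then have "s \<in> S1" using s unfolding S1_def switchings_def by (auto simp: PiE_def Pi_def)
      then show ?thesis using s by auto
    next
      case False
      define t where "t = restrict (\<lambda>u. - s u) V"
      have "s v0 = -1" using False switching_values[OF s(1) v0] by auto
      then have "t \<in> S1" using s v0 unfolding S1_def switchings_def t_def by (auto simp: PiE_def Pi_def)
      moreover have "signing_of t = signing_of s"
      proof
        fix e show "signing_of t e = signing_of s e"
        proof (cases "e \<in> E")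
          case True
          then obtain u v where "u \<in> V" "v \<in> V" "u \<noteq> v" "e = {u, v}" by (rule edgeE)
          then show ?thesis unfolding signing_of_def t_def by simp
        qed (simp add: signing_of_def)
      qed
      ultimately show ?thesis using s by (metis image_eqI)
    qed
  qed
  then have img: "balanced = signing_of ` S1" using S1_sub by auto
  have "inj_on signing_of S1"
  proof (rule inj_onI)
    fix s s' assume ss': "s \<in> S1" "s' \<in> S1" "signing_of s = signing_of s'"
    moreover have "s v0 = 1" "s' v0 = 1"
      using PiE_mem[OF ss'(1)[unfolded S1_def] v0] PiE_mem[OF ss'(2)[unfolded S1_def] v0] by auto
    ultimately show "s = s'" using switching_eq_if_signing_of_eq[of s s' v0] S1_sub v0 by auto
  qed
  then have "card (signing_of ` S1) = card S1" by (rule card_image)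
  then show ?thesis using img card_sign_vectors_fixed_at[OF finite_V v0] unfolding S1_def by simp
qed

lemma card_V_le: "card V \<le> card E + 1"
proof -
  have "card balanced \<le> card signings" by (rule card_mono[OF finite_signings balanced_subset_signings])
  then have "(2::nat) ^ (card V - 1) \<le> 2 ^ card E" using card_balanced card_signings by simp
  then show ?thesis by simp
qed

lemma bipartite_iff_switching: "is_bipartite V E \<longleftrightarrow> (\<exists>s\<in>switchings. \<forall>e\<in>E. (\<Prod>w\<in>e. s w) = -1)"
proof
  assume "is_bipartite V E"
  then obtain A where A: "A \<subseteq> V" "\<forall>e\<in>E. card (e \<inter> A) = 1" unfolding is_bipartite_def by blast
  define s where "s = restrict (\<lambda>u. if u \<in> A then -1 else (1::real)) V"
  have "(\<Prod>w\<in>e. s w) = -1" if e: "e \<in> E" for e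
  proof -
    obtain u v where uv: "u \<in> V" "v \<in> V" "u \<noteq> v" "e = {u, v}" using e by (rule edgeE)
    have "card ({u, v} \<inter> A) = 1" using A e uv by simp
    then have "(u \<in> A \<and> v \<notin> A) \<or> (u \<notin> A \<and> v \<in> A)" using uv(3)
      by (cases "u \<in> A"; cases "v \<in> A") (auto simp: Int_insert_left)
    then show ?thesis using uv unfolding s_def by auto
  qed
  moreover have "s \<in> switchings" unfolding s_def switchings_def by auto
  ultimately show "\<exists>s\<in>switchings. \<forall>e\<in>E. (\<Prod>w\<in>e. s w) = -1" by blast
next
  assume "\<exists>s\<in>switchings. \<forall>e\<in>E. (\<Prod>w\<in>e. s w) = -1"
  then obtain s where s: "s \<in> switchings" "\<forall>e\<in>E. (\<Prod>w\<in>e. s w) = -1" by blast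
  define A where "A = {u\<in>V. s u = -1}"
  have "card (e \<inter> A) = 1" if e: "e \<in> E" for e
  proof -
    obtain u v where uv: "u \<in> V" "v \<in> V" "u \<noteq> v" "e = {u, v}" using e by (rule edgeE)
    have "(\<Prod>w\<in>e. s w) = -1" using s(2) e by blast
    then have "s u * s v = -1" using uv by simp
    then have "(s u = -1 \<and> s v = 1) \<or> (s u = 1 \<and> s v = -1)"
      using switching_values[OF s(1) uv(1)] switching_values[OF s(1) uv(2)] by auto
    then show ?thesis using uv unfolding A_def by (auto simp: Int_insert_left)
  qed
  moreover have "A \<subseteq> V" unfolding A_def by blast
  ultimately show "is_bipartite V E" unfolding is_bipartite_def by blast
qed

lemma negate_in_signings: "c \<in> signings \<Longrightarrow> negate c \<in> signings"
  unfolding negate_def signings_def by auto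

lemma inj_on_negate: "inj_on negate signings"
proof (rule inj_onI)
  fix c d assume cd: "c \<in> signings" "d \<in> signings" "negate c = negate d"
  show "c = d"
  proof (rule PiE_ext[of c E "\<lambda>_. {-1, 1}"])
    show "c \<in> PiE E (\<lambda>_. {-1, 1})" "d \<in> PiE E (\<lambda>_. {-1, 1})" using cd unfolding signings_def by auto
    fix e assume "e \<in> E"
    then show "c e = d e" using fun_cong[OF cd(3), of e] unfolding negate_def by simp
  qed
qed

lemma antibalanced_subset_signings: "antibalanced \<subseteq> signings"
  using negate_in_signings balanced_subset_signings by auto

lemma card_antibalanced: "card antibalanced = 2 ^ (card V - 1)"
  using card_image[OF inj_on_subset[OF inj_on_negate balanced_subset_signings]] card_balanced by simp

lemma antibalanced_subset_balanced:
  assumes "is_bipartite V E" shows "antibalanced \<subseteq> balanced"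
proof
  fix c assume "c \<in> antibalanced"
  then obtain s where s: "s \<in> switchings" "c = negate (signing_of s)" by auto
  obtain s0 where s0: "s0 \<in> switchings" "\<forall>e\<in>E. (\<Prod>w\<in>e. s0 w) = -1"
    using assms bipartite_iff_switching by blast
  define t where "t = restrict (\<lambda>u. s u * s0 u) V"
  have "signing_of t = c"
  proof
    fix e show "signing_of t e = c e"
    proof (cases "e \<in> E")
      case True
      then obtain u v where uv: "u \<in> V" "v \<in> V" "u \<noteq> v" "e = {u, v}" by (rule edgeE)
      have "(\<Prod>w\<in>e. s0 w) = -1" using s0(2) True by blast
      then have "s0 u * s0 v = -1" using uv by simp
      have "signing_of t e = (s u * s v) * (s0 u * s0 v)"
        using True uv unfolding signing_of_def t_def by (simp add: algebra_simps)
      also have "\<dots> = c e" using \<open>s0 u * s0 v = -1\<close> True uv unfolding s(2) negate_def signing_of_def by simp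
      finally show ?thesis .
    qed (simp add: signing_of_def s(2) negate_def)
  qed
  moreover have "t \<in> switchings" unfolding t_def by (rule switching_mult[OF s(1) s0(1)])
  ultimately show "c \<in> balanced" by blast
qed

lemma balanced_antibalanced_disjoint:
  assumes "\<not> is_bipartite V E" shows "antibalanced \<inter> balanced = {}"
proof (rule ccontr)
  assume "antibalanced \<inter> balanced \<noteq> {}"
  then obtain s s' where s: "s \<in> switchings" "s' \<in> switchings" "negate (signing_of s) = signing_of s'"
    by auto
  define t where "t = restrict (\<lambda>u. s u * s' u) V"
  have "(\<Prod>w\<in>e. t w) = -1" if e: "e \<in> E" for e
  proof -
    obtain u v where uv: "u \<in> V" "v \<in> V" "u \<noteq> v" "e = {u, v}" using e by (rule edgeE)
    have neg: "s' u * s' v = - (s u * s v)"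
      using fun_cong[OF s(3), of e] e uv unfolding negate_def signing_of_def by simp
    have "(s u * s' u) * (s v * s' v) = (s u * s v) * (s' u * s' v)" by (simp add: algebra_simps)
    also have "\<dots> = - (s u * s v)\<^sup>2" unfolding neg by (simp add: power2_eq_square)
    also have "\<dots> = -1"
      using switching_values[OF s(1) uv(1)] switching_values[OF s(1) uv(2)] by auto
    finally have "(s u * s' u) * (s v * s' v) = -1" .
    then show ?thesis using uv unfolding t_def by simp
  qed
  moreover have "t \<in> switchings" unfolding t_def by (rule switching_mult[OF s(1) s(2)])
  ultimately show False using assms bipartite_iff_switching by blast
qed

lemma balanced_eq_signings_if_tree:
  assumes "is_tree V E" shows "balanced = signings"
proof (rule card_subset_eq[OF finite_signings balanced_subset_signings])
  have "card V - 1 = card E" using assms unfolding is_tree_def by linarith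
  then show "card balanced = card signings" using card_balanced card_signings by simp
qed

lemma bipartite_if_tree:
  assumes "is_tree V E" shows "is_bipartite V E"
proof -
  have "restrict (\<lambda>_. -1) E \<in> balanced"
    using balanced_eq_signings_if_tree[OF assms] unfolding signings_def by auto
  then obtain s where s: "s \<in> switchings" "restrict (\<lambda>_. -1) E = signing_of s" by blast
  then have "\<forall>e\<in>E. (\<Prod>w\<in>e. s w) = -1" using restrict_eq_signing_of_iff by auto
  then show ?thesis using bipartite_iff_switching s(1) by blast
qed

lemma balanced_un_antibalanced_if_unicyclic:
  assumes "is_unicyclic V E" "\<not> is_bipartite V E"
  shows "balanced \<union> antibalanced = signings"
proof (rule card_subset_eq[OF finite_signings])
  show sub: "balanced \<union> antibalanced \<subseteq> signings"
    using balanced_subset_signings antibalanced_subset_signings by auto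
  have "card V \<ge> 1" using finite_V V_nonempty by (simp add: Suc_leI card_gt_0_iff)
  have "card (balanced \<union> antibalanced) = card balanced + card antibalanced"
    using balanced_antibalanced_disjoint[OF assms(2)] finite_subset[OF sub finite_signings]
    by (intro card_Un_disjoint) auto
  also have "\<dots> = 2 ^ card V" using card_balanced card_antibalanced \<open>card V \<ge> 1\<close>
    by (cases "card V") auto
  also have "\<dots> = card signings" using assms(1) card_signings unfolding is_unicyclic_def by simp
  finally show "card (balanced \<union> antibalanced) = card signings" .
qed

lemma exists_unbalanced_signing:
  assumes "\<not> is_tree V E" "\<not> (is_unicyclic V E \<and> \<not> is_bipartite V E)"
  obtains c where "c \<in> signings" "c \<notin> balanced \<union> antibalanced"
proof -
  have fin: "finite (balanced \<union> antibalanced)"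
    using finite_subset[OF balanced_subset_signings finite_signings]
      finite_subset[OF antibalanced_subset_signings finite_signings] by simp
  have more_edges: "card E \<ge> card V" using card_V_le assms(1) connected unfolding is_tree_def by auto
  have "card (balanced \<union> antibalanced) < card signings"
  proof (cases "is_bipartite V E")
    case True
    then have "card (balanced \<union> antibalanced) = 2 ^ (card V - 1)"
      using antibalanced_subset_balanced card_balanced by (simp add: Un_absorb2)
    also have "\<dots> < 2 ^ card E"
    proof -
      have "card V > 0" using finite_V V_nonempty by (simp add: card_gt_0_iff)
      then have "card V - 1 < card E" using more_edges by linarith
      then show ?thesis by simp
    qed
    finally show ?thesis using card_signings by simp
  next
    case False
    then have "card E \<noteq> card V" using assms(2) connected unfolding is_unicyclic_def by auto
    have "card (balanced \<union> antibalanced) \<le> 2 ^ (card V - 1) + 2 ^ (card V - 1)"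
      using card_Un_le[of balanced antibalanced] card_balanced card_antibalanced by simp
    also have "\<dots> \<le> 2 ^ card V" using finite_V V_nonempty by (cases "card V") auto
    also have "\<dots> < 2 ^ card E" using more_edges \<open>card E \<noteq> card V\<close> by simp
    finally show ?thesis using card_signings by simp
  qed
  then have "\<not> signings \<subseteq> balanced \<union> antibalanced" using card_mono[OF fin, of signings] by linarith
  then show ?thesis using that by blast
qed

lemma spec_radius_signed_le_rho:
  assumes c: "signing E c" shows "spec_radius V (signed_adj E c) \<le> rho"
proof -
  obtain \<mu> z where z: "real_eigenpair V (signed_adj E c) \<mu> z" "\<bar>\<mu>\<bar> = spec_radius V (signed_adj E c)"
    using spec_radius_attained[OF finite_V V_nonempty symmetric_on_signed_adj] by blast
  show ?thesis using abs_eigenvalue_le_rho[OF z(1) abs_signed_adj_le_adj[OF c]] z(2) by simp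
qed

lemma balanced_if_spec_radius_eq_rho:
  assumes c: "signing E c" and eq: "spec_radius V (signed_adj E c) = rho"
  shows "restrict c E \<in> balanced \<union> antibalanced"
proof -
  obtain \<mu> z where z: "real_eigenpair V (signed_adj E c) \<mu> z" "\<bar>\<mu>\<bar> = rho"
    using spec_radius_attained[OF finite_V V_nonempty symmetric_on_signed_adj] eq by metis
  note sign = eigenvalue_abs_eq_rho_signing[OF c z]
  define s where "s = restrict (\<lambda>u. sgn (z u)) V"
  have s: "s \<in> switchings" using sign(1) unfolding s_def switchings_def by (auto simp: sgn_if)
  have prod_s: "(\<Prod>w\<in>e. s w) = (\<Prod>w\<in>e. sgn (z w))" if "e \<in> E" for e
  proof -
    obtain u v where "u \<in> V" "v \<in> V" "e = {u, v}" using \<open>e \<in> E\<close> by (rule edgeE)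
    then show ?thesis unfolding s_def by (intro prod.cong) auto
  qed
  have "\<mu> \<noteq> 0" using z(2) rho_ge_1 by auto
  then consider "sgn \<mu> = 1" | "sgn \<mu> = -1" by (cases "\<mu> > 0") (auto simp: sgn_if)
  then show ?thesis
  proof cases
    case 1
    then have "restrict c E = signing_of s" using sign(2) prod_s restrict_eq_signing_of_iff by simp
    then show ?thesis using s by blast
  next
    case 2
    then have "restrict c E = negate (signing_of s)" using sign(2) prod_s restrict_eq_negate_iff by simp
    then show ?thesis using s by blast
  qed
qed

lemma adj_eigenvalue_if_balanced:
  assumes bal: "restrict c E \<in> balanced \<union> antibalanced"
    and z: "real_eigenpair V (signed_adj E c) \<mu> z"
  obtains \<nu> y where "real_eigenpair V (adj E) \<nu> y" "\<bar>\<nu>\<bar> = \<bar>\<mu>\<bar>"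
proof -
  obtain s \<sigma> where s: "s \<in> switchings" and \<sigma>: "\<sigma> = 1 \<or> \<sigma> = -1"
    and c: "\<forall>e\<in>E. c e = \<sigma> * (\<Prod>w\<in>e. s w)"
  proof (cases "restrict c E \<in> balanced")
    case True
    then obtain s where "s \<in> switchings" "restrict c E = signing_of s" by blast
    then show ?thesis using that[of s 1] restrict_eq_signing_of_iff by simp
  next
    case False
    then obtain s where "s \<in> switchings" "restrict c E = negate (signing_of s)" using bal by blast
    then show ?thesis using that[of s "-1"] restrict_eq_negate_iff by simp
  qed
  have "real_eigenpair V (adj E) (\<sigma> * \<mu>) (\<lambda>u. s u * z u)"
    by (rule switching_eigenpair[OF _ \<sigma> c z]) (use s switching_values in blast)
  then show ?thesis using that \<sigma> by (auto simp: abs_mult)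
qed

lemma lambda_min_le: "real_eigenpair V (adj E) \<nu> z \<Longrightarrow> lambda_min V E \<le> \<nu>"
  unfolding lambda_min_def min_eigenvalue_def
  by (rule Min_le[OF finite_real_mat_eigenvalues[OF finite_V]]) (simp add: mat_eigenvalue_if_real_eigenpair)

lemma lambda_min_eigenpair: obtains z where "real_eigenpair V (adj E) (lambda_min V E) z"
proof -
  obtain p where "rayleigh_max V (adj E) rho p" by (rule rayleigh_max_rho)
  then have "mat_eigenvalue V (adj E) (complex_of_real rho)"
    using mat_eigenvalue_if_real_eigenpair rayleigh_max_eigenpair[OF finite_V symmetric_on_adj] by blast
  then have "lambda_min V E \<in> {\<mu>. mat_eigenvalue V (adj E) (complex_of_real \<mu>)}"
    unfolding lambda_min_def min_eigenvalue_def
    by (intro Min_in finite_real_mat_eigenvalues[OF finite_V]) auto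
  then obtain \<mu> z where "complex_of_real (lambda_min V E) = complex_of_real \<mu>" "real_eigenpair V (adj E) \<mu> z"
    using symmetric_mat_eigenvalueE[OF finite_V symmetric_on_adj] by blast
  then show ?thesis using that by simp
qed

lemma lambda_min_le_minus_1: "lambda_min V E \<le> -1"
proof -
  let ?N = "\<lambda>u w. - adj E u w"
  have sym: "symmetric_on V ?N" using symmetric_on_adj[of V E] unfolding symmetric_on_def by auto
  obtain L q where max: "rayleigh_max V ?N L q" using rayleigh_max_exists[OF finite_V V_nonempty] by blast
  have "real_eigenpair V ?N L q" by (rule rayleigh_max_eigenpair[OF finite_V sym max])
  then have eig: "real_eigenpair V (adj E) (- L) q"
    unfolding real_eigenpair_def mat_vec_def by (auto simp: sum_negf)
  obtain a b where ab: "a \<in> V" "b \<in> V" "a \<noteq> b" "{a, b} \<in> E" by (rule some_edge)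
  define y where "y \<equiv> \<lambda>u. (if u = a then 1 else 0) + (if u = b then -1 else (0::real))"
  have "quad_form V (adj E) y = -2" "sq_norm V y = 2"
    using quad_form_adj_two_vertices[OF ab, of "-1"] unfolding y_def by simp_all
  moreover have "quad_form V ?N y = - quad_form V (adj E) y" unfolding bilin_form_def by (simp add: sum_negf)
  moreover have "quad_form V ?N y \<le> L * sq_norm V y" using max unfolding rayleigh_max_def by blast
  ultimately have "- L \<le> -1" by simp
  then show ?thesis using lambda_min_le[OF eig] by simp
qed

lemma abs_lambda_min_less_rho:
  assumes "\<not> is_bipartite V E" shows "\<bar>lambda_min V E\<bar> < rho"
proof (rule ccontr)
  obtain z where z: "real_eigenpair V (adj E) (lambda_min V E) z" by (rule lambda_min_eigenpair)
  assume "\<not> \<bar>lambda_min V E\<bar> < rho"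
  moreover have "\<bar>lambda_min V E\<bar> \<le> rho" by (rule abs_eigenvalue_le_rho[OF z]) (simp add: adj_nonneg)
  ultimately have abs: "\<bar>lambda_min V E\<bar> = rho" by simp
  have one: "signing E (\<lambda>_. 1)" unfolding signing_def by simp
  note sign = eigenvalue_abs_eq_rho_signing[OF one z[folded signed_adj_one] abs]
  define s where "s = restrict (\<lambda>u. sgn (z u)) V"
  have "s \<in> switchings" using sign(1) unfolding s_def switchings_def by (auto simp: sgn_if)
  moreover have "(\<Prod>w\<in>e. s w) = -1" if "e \<in> E" for e
  proof -
    obtain u v where "u \<in> V" "v \<in> V" "e = {u, v}" using \<open>e \<in> E\<close> by (rule edgeE)
    then have "(\<Prod>w\<in>e. s w) = (\<Prod>w\<in>e. sgn (z w))" unfolding s_def by (intro prod.cong) auto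
    also have "\<dots> = -1" using sign(2) \<open>e \<in> E\<close> lambda_min_le_minus_1 by (simp add: sgn_if)
    finally show ?thesis .
  qed
  ultimately show False using assms bipartite_iff_switching by blast
qed

definition Gamma_radii :: "real set" where
  "Gamma_radii = {spec_radius V (signed_adj E \<pi>) | \<pi>. signing E \<pi> \<and> spec_radius V (signed_adj E \<pi>) < rho}"

lemma rho_Gamma_eq_Max: "rho_Gamma V E = Max Gamma_radii"
  unfolding rho_Gamma_def Gamma_radii_def signing_def ..

lemma finite_Gamma_radii: "finite Gamma_radii"
proof -
  have "Gamma_radii \<subseteq> (\<lambda>c. spec_radius V (signed_adj E c)) ` signings"
  proof
    fix r assume "r \<in> Gamma_radii"
    then obtain \<pi> where "signing E \<pi>" "r = spec_radius V (signed_adj E \<pi>)" unfolding Gamma_radii_def by auto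
    then show "r \<in> (\<lambda>c. spec_radius V (signed_adj E c)) ` signings"
      using restrict_in_signings_iff signed_adj_restrict by (metis image_eqI)
  qed
  then show ?thesis using finite_subset finite_signings by blast
qed

lemma Gamma_radii_nonempty:
  assumes "\<not> is_tree V E" "\<not> (is_unicyclic V E \<and> \<not> is_bipartite V E)"
  shows "Gamma_radii \<noteq> {}"
proof -
  obtain c where c: "c \<in> signings" "c \<notin> balanced \<union> antibalanced"
    by (rule exists_unbalanced_signing[OF assms])
  have sig: "signing E c" by (rule signing_if_in_signings[OF c(1)])
  have "restrict c E = c" using c(1) unfolding signings_def by (simp add: PiE_restrict)
  then have "spec_radius V (signed_adj E c) \<noteq> rho" using balanced_if_spec_radius_eq_rho[OF sig] c(2) by auto
  then have "spec_radius V (signed_adj E c) < rho" using spec_radius_signed_le_rho[OF sig] by simp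
  then show ?thesis unfolding Gamma_radii_def using sig by blast
qed

lemma rho_Gamma_attained:
  assumes "Gamma_radii \<noteq> {}"
  obtains \<pi> where "signing E \<pi>" "rho_Gamma V E = spec_radius V (signed_adj E \<pi>)"
    "spec_radius V (signed_adj E \<pi>) < rho"
proof -
  have "rho_Gamma V E \<in> Gamma_radii"
    unfolding rho_Gamma_eq_Max by (rule Max_in[OF finite_Gamma_radii assms])
  then show ?thesis using that unfolding Gamma_radii_def by blast
qed

lemma spec_radius_le_rho_Gamma:
  "signing E \<pi> \<Longrightarrow> spec_radius V (signed_adj E \<pi>) < rho \<Longrightarrow> spec_radius V (signed_adj E \<pi>) \<le> rho_Gamma V E"
  unfolding rho_Gamma_eq_Max by (rule Max_ge[OF finite_Gamma_radii]) (auto simp: Gamma_radii_def)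

end

section \<open>Eigenvalues of the 3-power hypergraph\<close>

definition signed_adj_on :: "'a set set \<Rightarrow> 'a set \<Rightarrow> ('a set \<Rightarrow> real) \<Rightarrow> 'a \<Rightarrow> 'a \<Rightarrow> real" where
  "signed_adj_on E S c u v = (if u \<in> S \<and> v \<in> S then signed_adj E c u v else 0)"

lemma symmetric_on_signed_adj_on: "symmetric_on V (signed_adj_on E S c)"
  using symmetric_on_signed_adj[of UNIV E c] unfolding symmetric_on_def signed_adj_on_def by auto

lemma abs_signed_adj_on_le_adj: "signing E c \<Longrightarrow> \<bar>signed_adj_on E S c u v\<bar> \<le> adj E u v"
  unfolding signed_adj_on_def using abs_signed_adj_le_adj[of E c u v] by (auto simp: adj_nonneg)

definition power3_edge :: "'a set \<Rightarrow> ('a + 'a set) set" where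
  "power3_edge e = insert (Inr e) (Inl ` e)"

lemma power3_edges_eq: "power3_edges E = power3_edge ` E"
  unfolding power3_edges_def power3_edge_def ..

lemma root3_sq_eq_if_cube:
  fixes s :: complex
  assumes "s ^ 3 = complex_of_real \<mu>"
  shows "root 3 (\<mu>\<^sup>2) = (cmod s)\<^sup>2"
proof -
  have "\<bar>\<mu>\<bar> = (cmod s) ^ 3" using arg_cong[OF assms, of cmod] by (simp add: norm_power)
  then have "\<mu>\<^sup>2 = ((cmod s)\<^sup>2) ^ 3" by (metis power2_abs power_mult mult.commute)
  then show ?thesis using real_root_power_cancel[of 3 "(cmod s)\<^sup>2"] by simp
qed

context connected_graph
begin

lemma power3_edges_containing_Inl:
  "{h\<in>power3_edges E. Inl u \<in> h} = (\<lambda>v. power3_edge {u, v}) ` {v\<in>V. {u, v}\<in>E}"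
proof
  show "{h\<in>power3_edges E. Inl u \<in> h} \<subseteq> (\<lambda>v. power3_edge {u, v}) ` {v\<in>V. {u, v}\<in>E}"
  proof
    fix h assume "h \<in> {h\<in>power3_edges E. Inl u \<in> h}"
    then obtain e where e: "e \<in> E" "h = power3_edge e" "u \<in> e"
      unfolding power3_edges_eq power3_edge_def by auto
    obtain a b where ab: "a \<in> V" "b \<in> V" "a \<noteq> b" "e = {a, b}" using e(1) by (rule edgeE)
    show "h \<in> (\<lambda>v. power3_edge {u, v}) ` {v\<in>V. {u, v}\<in>E}"
    proof (cases "u = a")
      case True
      then show ?thesis using e ab by auto
    next
      case False
      then have "u = b" using e(3) ab by auto
      then show ?thesis using e ab by (auto simp: insert_commute)
    qed
  qed
  show "(\<lambda>v. power3_edge {u, v}) ` {v\<in>V. {u, v}\<in>E} \<subseteq> {h\<in>power3_edges E. Inl u \<in> h}"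
    unfolding power3_edges_eq power3_edge_def by auto
qed

lemma power3_edges_at_Inl:
  fixes x :: "'a + 'a set \<Rightarrow> 'r::comm_ring_1"
  shows "(\<Sum>h\<in>{h\<in>power3_edges E. Inl u \<in> h}. \<Prod>j\<in>h - {Inl u}. x j)
       = (\<Sum>v\<in>{v\<in>V. {u, v}\<in>E}. x (Inr {u, v}) * x (Inl v))"
proof -
  have "inj_on (\<lambda>v. power3_edge {u, v}) {v\<in>V. {u, v}\<in>E}"
  proof (rule inj_onI)
    fix v v' assume v: "v \<in> {v\<in>V. {u, v}\<in>E}" "v' \<in> {v\<in>V. {u, v}\<in>E}"
      and eq: "power3_edge {u, v} = power3_edge {u, v'}"
    have "Inr {u, v} \<in> power3_edge {u, v}" unfolding power3_edge_def by simp
    then have "Inr {u, v} \<in> power3_edge {u, v'}" using eq by simp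
    then have "Inr {u, v} = Inr {u, v'}" unfolding power3_edge_def by blast
    then have "{u, v} = {u, v'}" by simp
    moreover have "u \<noteq> v" "u \<noteq> v'" using v edge_vertices(3) by auto
    ultimately show "v = v'" by (auto simp: doubleton_eq_iff)
  qed
  then have "(\<Sum>h\<in>{h\<in>power3_edges E. Inl u \<in> h}. \<Prod>j\<in>h - {Inl u}. x j)
      = (\<Sum>v\<in>{v\<in>V. {u, v}\<in>E}. \<Prod>j\<in>power3_edge {u, v} - {Inl u}. x j)"
    unfolding power3_edges_containing_Inl by (rule sum.reindex[unfolded comp_def])
  also have "\<dots> = (\<Sum>v\<in>{v\<in>V. {u, v}\<in>E}. x (Inr {u, v}) * x (Inl v))"
  proof (intro sum.cong refl)
    fix v assume "v \<in> {v\<in>V. {u, v}\<in>E}"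
    then have "u \<noteq> v" using edge_vertices(3) by auto
    then have "power3_edge {u, v} - {Inl u} = {Inr {u, v}, Inl v}" unfolding power3_edge_def by auto
    then show "(\<Prod>j\<in>power3_edge {u, v} - {Inl u}. x j) = x (Inr {u, v}) * x (Inl v)" by simp
  qed
  finally show ?thesis .
qed

lemma power3_edges_at_Inr:
  fixes x :: "'a + 'a set \<Rightarrow> 'r::comm_ring_1"
  assumes e: "e \<in> E"
  shows "(\<Sum>h\<in>{h\<in>power3_edges E. Inr e \<in> h}. \<Prod>j\<in>h - {Inr e}. x j) = (\<Prod>v\<in>e. x (Inl v))"
proof -
  have "{h\<in>power3_edges E. Inr e \<in> h} = {power3_edge e}"
    unfolding power3_edges_eq power3_edge_def using e by auto
  moreover have "power3_edge e - {Inr e} = Inl ` e" unfolding power3_edge_def by auto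
  ultimately show ?thesis by (simp add: prod.reindex)
qed

lemma power3_eigen_equations_iff:
  fixes x :: "'a + 'a set \<Rightarrow> complex"
  shows "(\<forall>i\<in>power3_vertices V E. (\<Sum>h\<in>{h\<in>power3_edges E. i \<in> h}. \<Prod>j\<in>h - {i}. x j) = lam * (x i)\<^sup>2)
     \<longleftrightarrow> (\<forall>u\<in>V. (\<Sum>v\<in>{v\<in>V. {u, v}\<in>E}. x (Inr {u, v}) * x (Inl v)) = lam * (x (Inl u))\<^sup>2) \<and>
         (\<forall>e\<in>E. (\<Prod>v\<in>e. x (Inl v)) = lam * (x (Inr e))\<^sup>2)"
proof -
  have split: "(\<forall>i\<in>power3_vertices V E. P i) \<longleftrightarrow> (\<forall>u\<in>V. P (Inl u)) \<and> (\<forall>e\<in>E. P (Inr e))" for P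
    unfolding power3_vertices_def by auto
  show ?thesis unfolding split by (simp add: power3_edges_at_Inl power3_edges_at_Inr)
qed

lemma power3_eigenvalue_zero: "hg_eigenvalue (power3_vertices V E) (power3_edges E) 0"
proof -
  obtain e0 where e0: "e0 \<in> E" using edges_nonempty by blast
  define x where "x i = (if i = Inr e0 then (1::complex) else 0)" for i :: "'a + 'a set"
  have "(\<Prod>v\<in>e. x (Inl v)) = 0" if "e \<in> E" for e
  proof -
    obtain a b where "e = {a, b}" using \<open>e \<in> E\<close> by (rule edgeE)
    then show ?thesis by (cases "a = b") (simp_all add: x_def)
  qed
  then have "\<forall>i\<in>power3_vertices V E. (\<Sum>h\<in>{h\<in>power3_edges E. i \<in> h}. \<Prod>j\<in>h - {i}. x j) = 0 * (x i)\<^sup>2"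
    unfolding power3_eigen_equations_iff by (simp add: x_def)
  moreover have "Inr e0 \<in> power3_vertices V E" "x (Inr e0) \<noteq> 0"
    using e0 unfolding power3_vertices_def x_def by auto
  ultimately show ?thesis unfolding hg_eigenvalue_def by blast
qed

text \<open>Hypergraph eigenvectors for the eigenvalue \<open>s\<^sup>2\<close> correspond to eigenvectors \<open>y\<^sup>3\<close> of a signed
  induced subgraph on \<open>S\<close> for the eigenvalue \<open>s\<^sup>3\<close>: vertex \<open>u\<close> carries \<open>y u\<^sup>2\<close> and an edge
  \<open>e \<subseteq> S\<close> carries \<open>c e * (\<Prod>w\<in>e. y w) / s\<close>, the sign \<open>c e\<close> being the signing.\<close>

lemma power3_vertex_sum:
  fixes x :: "'a + 'a set \<Rightarrow> complex" and y :: "'a \<Rightarrow> complex"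
  assumes u: "u \<in> V"
    and Inl: "\<And>v. v \<in> V \<Longrightarrow> x (Inl v) = (y v)\<^sup>2"
    and Inr: "\<And>e. e \<in> E \<Longrightarrow> x (Inr e) = (if e \<subseteq> S then of_real (c e) * (\<Prod>w\<in>e. y w) / s else 0)"
    and outside: "\<And>v. v \<in> V \<Longrightarrow> v \<notin> S \<Longrightarrow> y v = 0"
  shows "(\<Sum>v\<in>{v\<in>V. {u, v}\<in>E}. x (Inr {u, v}) * x (Inl v))
       = y u / s * (\<Sum>v\<in>V. of_real (signed_adj_on E S c u v) * (y v)^3)"
proof -
  have "x (Inr {u, v}) * x (Inl v) = y u / s * (of_real (signed_adj_on E S c u v) * (y v)^3)"
    if v: "v \<in> {v\<in>V. {u, v}\<in>E}" for v
  proof -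
    have uv: "{u, v} \<in> E" "u \<noteq> v" "v \<in> V" using v edge_vertices(3) by auto
    show ?thesis
    proof (cases "u \<in> S \<and> v \<in> S")
      case True
      then show ?thesis using uv Inr[OF uv(1)] Inl[OF uv(3)]
        by (simp add: signed_adj_on_def signed_adj_def power2_eq_square power3_eq_cube)
    next
      case False
      then have "x (Inr {u, v}) = 0 \<or> x (Inl v) = 0" using Inr[OF uv(1)] Inl[OF uv(3)] outside[OF uv(3)] by auto
      moreover have "signed_adj_on E S c u v = 0" using False unfolding signed_adj_on_def by auto
      ultimately show ?thesis by auto
    qed
  qed
  then have "(\<Sum>v\<in>{v\<in>V. {u, v}\<in>E}. x (Inr {u, v}) * x (Inl v))
      = (\<Sum>v\<in>{v\<in>V. {u, v}\<in>E}. y u / s * (of_real (signed_adj_on E S c u v) * (y v)^3))"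
    by (rule sum.cong[OF refl])
  also have "\<dots> = y u / s * (\<Sum>v\<in>V. of_real (signed_adj_on E S c u v) * (y v)^3)"
    unfolding sum_distrib_left sum.inter_filter[OF finite_V]
    by (intro sum.cong refl) (simp add: signed_adj_on_def signed_adj_def)
  finally show ?thesis .
qed

lemma power3_edge_product:
  fixes x :: "'a + 'a set \<Rightarrow> complex" and y :: "'a \<Rightarrow> complex"
  assumes e: "e \<in> E" and c: "signing E c"
    and Inl: "\<And>v. v \<in> V \<Longrightarrow> x (Inl v) = (y v)\<^sup>2"
    and Inr: "\<And>e. e \<in> E \<Longrightarrow> x (Inr e) = (if e \<subseteq> S then of_real (c e) * (\<Prod>w\<in>e. y w) / s else 0)"
    and outside: "\<And>v. v \<in> V \<Longrightarrow> v \<notin> S \<Longrightarrow> y v = 0" and s: "s \<noteq> 0"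
  shows "(\<Prod>v\<in>e. x (Inl v)) = s\<^sup>2 * (x (Inr e))\<^sup>2"
proof -
  obtain a b where ab: "a \<in> V" "b \<in> V" "a \<noteq> b" "e = {a, b}" using e by (rule edgeE)
  show ?thesis
  proof (cases "e \<subseteq> S")
    case True
    have "x (Inr e) = of_real (c e) * (y a * y b) / s" using True ab Inr[OF e] by simp
    then have "s\<^sup>2 * (x (Inr e))\<^sup>2 = (of_real (c e))\<^sup>2 * ((y a)\<^sup>2 * (y b)\<^sup>2)"
      using s by (simp add: power_divide power_mult_distrib)
    moreover have "(complex_of_real (c e))\<^sup>2 = 1" using c e unfolding signing_def by auto
    ultimately show ?thesis using ab Inl by simp
  next
    case False
    then have "y a = 0 \<or> y b = 0" using ab outside by auto
    then show ?thesis using False ab Inl Inr[OF e] by auto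
  qed
qed

lemma power3_vertex_entry_nonzero:
  fixes x :: "'a + 'a set \<Rightarrow> complex"
  assumes nz: "\<exists>i\<in>power3_vertices V E. x i \<noteq> 0" and lam: "lam \<noteq> 0"
    and eq: "\<And>e. e \<in> E \<Longrightarrow> (\<Prod>v\<in>e. x (Inl v)) = lam * (x (Inr e))\<^sup>2"
  obtains u where "u \<in> V" "x (Inl u) \<noteq> 0"
proof -
  have "\<exists>u\<in>V. x (Inl u) \<noteq> 0"
  proof (rule ccontr)
    assume "\<not> (\<exists>u\<in>V. x (Inl u) \<noteq> 0)"
    then have none: "x (Inl u) = 0" if "u \<in> V" for u using that by blast
    have "x (Inr e) = 0" if "e \<in> E" for e
    proof -
      obtain a b where "a \<in> V" "b \<in> V" "e = {a, b}" using \<open>e \<in> E\<close> by (rule edgeE)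
      then have "(\<Prod>v\<in>e. x (Inl v)) = 0" using none by (cases "a = b") simp_all
      then show ?thesis using eq[OF that] lam by simp
    qed
    then show False using nz none unfolding power3_vertices_def by auto
  qed
  then show ?thesis using that by blast
qed

lemma power3_edge_entry:
  fixes x :: "'a + 'a set \<Rightarrow> complex" and y :: "'a \<Rightarrow> complex"
  assumes e: "e \<in> E" and eq: "(\<Prod>v\<in>e. x (Inl v)) = s\<^sup>2 * (x (Inr e))\<^sup>2" and s: "s \<noteq> 0"
    and Inl: "\<And>v. v \<in> V \<Longrightarrow> x (Inl v) = (y v)\<^sup>2"
    and outside: "\<And>v. v \<in> V \<Longrightarrow> v \<notin> S \<Longrightarrow> y v = 0"
  shows "e \<subseteq> S \<Longrightarrow> x (Inr e) = (\<Prod>w\<in>e. y w) / s \<or> x (Inr e) = - ((\<Prod>w\<in>e. y w) / s)"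
    and "\<not> e \<subseteq> S \<Longrightarrow> x (Inr e) = 0"
proof -
  obtain a b where ab: "a \<in> V" "b \<in> V" "a \<noteq> b" "e = {a, b}" using e by (rule edgeE)
  have r: "(y a)\<^sup>2 * (y b)\<^sup>2 = s\<^sup>2 * (x (Inr e))\<^sup>2" using eq ab Inl by simp
  have "((\<Prod>w\<in>e. y w) / s)\<^sup>2 = (x (Inr e))\<^sup>2"
    using ab r s by (simp add: power_divide power_mult_distrib field_simps)
  then show "x (Inr e) = (\<Prod>w\<in>e. y w) / s \<or> x (Inr e) = - ((\<Prod>w\<in>e. y w) / s)"
    by (metis power2_eq_iff)
  assume "\<not> e \<subseteq> S"
  then have "y a = 0 \<or> y b = 0" using ab outside by auto
  then show "x (Inr e) = 0" using r s by auto
qed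

lemma power3_eigenvalue_if_signed_eigenpair:
  assumes c: "signing E c" and z: "real_eigenpair V (signed_adj_on E S c) \<mu> z"
  shows "hg_eigenvalue (power3_vertices V E) (power3_edges E) (complex_of_real (root 3 (\<mu>\<^sup>2)))"
proof (cases "\<mu> = 0")
  case True
  then show ?thesis using power3_eigenvalue_zero by simp
next
  case False
  define s where "s = complex_of_real (root 3 \<mu>)"
  define y where "y u = complex_of_real (root 3 (z u))" for u
  define x where "x i = (case i of Inl u \<Rightarrow> (y u)\<^sup>2
     | Inr e \<Rightarrow> (if e \<subseteq> S then of_real (c e) * (\<Prod>w\<in>e. y w) / s else 0))" for i
  have s: "s \<noteq> 0" "s ^ 3 = of_real \<mu>" "s\<^sup>2 = of_real (root 3 (\<mu>\<^sup>2))"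
    unfolding s_def using False by (simp_all add: odd_real_root_pow real_root_power flip: of_real_power)
  have y3: "(y u) ^ 3 = of_real (z u)" for u
    unfolding y_def by (simp add: odd_real_root_pow flip: of_real_power)
  have outside: "y v = 0" if "v \<in> V" "v \<notin> S" for v
  proof -
    have "mat_vec V (signed_adj_on E S c) z v = 0" unfolding mat_vec_def signed_adj_on_def using that by simp
    then show ?thesis using z that False unfolding real_eigenpair_def y_def by simp
  qed
  have Inl: "x (Inl v) = (y v)\<^sup>2" if "v \<in> V" for v unfolding x_def by simp
  have Inr: "x (Inr e) = (if e \<subseteq> S then of_real (c e) * (\<Prod>w\<in>e. y w) / s else 0)" if "e \<in> E" for e
    unfolding x_def by simp
  have "(\<Sum>v\<in>{v\<in>V. {u, v}\<in>E}. x (Inr {u, v}) * x (Inl v)) = s\<^sup>2 * (x (Inl u))\<^sup>2" if u: "u \<in> V" for u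
  proof -
    have "(\<Sum>v\<in>{v\<in>V. {u, v}\<in>E}. x (Inr {u, v}) * x (Inl v))
        = y u / s * (\<Sum>v\<in>V. of_real (signed_adj_on E S c u v) * (y v) ^ 3)"
      by (rule power3_vertex_sum[OF u Inl Inr outside])
    also have "(\<Sum>v\<in>V. of_real (signed_adj_on E S c u v) * (y v) ^ 3) = of_real (mat_vec V (signed_adj_on E S c) z u)"
      unfolding mat_vec_def y3 by simp
    also have "\<dots> = s ^ 3 * (y u) ^ 3" using z u unfolding real_eigenpair_def s(2) y3 by simp
    also have "y u / s * (s ^ 3 * (y u) ^ 3) = s\<^sup>2 * (x (Inl u))\<^sup>2"
      using s(1) Inl[OF u] by (simp add: field_simps power2_eq_square power3_eq_cube)
    finally show ?thesis .
  qed
  moreover have "(\<Prod>v\<in>e. x (Inl v)) = s\<^sup>2 * (x (Inr e))\<^sup>2" if "e \<in> E" for e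
    by (rule power3_edge_product[OF that c Inl Inr outside s(1)])
  ultimately have "\<forall>i\<in>power3_vertices V E.
      (\<Sum>h\<in>{h\<in>power3_edges E. i \<in> h}. \<Prod>j\<in>h - {i}. x j) = of_real (root 3 (\<mu>\<^sup>2)) * (x i)\<^sup>2"
    unfolding power3_eigen_equations_iff s(3) by blast
  moreover obtain w where "w \<in> V" "z w \<noteq> 0" using z unfolding real_eigenpair_def by blast
  then have "Inl w \<in> power3_vertices V E" "x (Inl w) \<noteq> 0"
    unfolding power3_vertices_def x_def y_def by auto
  ultimately show ?thesis unfolding hg_eigenvalue_def by blast
qed

lemma signed_eigenpair_if_power3_eigenvalue:
  assumes hg: "hg_eigenvalue (power3_vertices V E) (power3_edges E) lam" and lam: "lam \<noteq> 0"
  obtains S c \<mu> z where "signing E c" "real_eigenpair V (signed_adj_on E S c) \<mu> z" "cmod lam = root 3 (\<mu>\<^sup>2)"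
proof -
  obtain x where nz: "\<exists>i\<in>power3_vertices V E. x i \<noteq> 0"
    and eqs: "\<forall>i\<in>power3_vertices V E. (\<Sum>h\<in>{h\<in>power3_edges E. i \<in> h}. \<Prod>j\<in>h - {i}. x j) = lam * (x i)\<^sup>2"
    using hg unfolding hg_eigenvalue_def by blast
  have eqL: "\<And>u. u \<in> V \<Longrightarrow> (\<Sum>v\<in>{v\<in>V. {u, v}\<in>E}. x (Inr {u, v}) * x (Inl v)) = lam * (x (Inl u))\<^sup>2"
    and eqR: "\<And>e. e \<in> E \<Longrightarrow> (\<Prod>v\<in>e. x (Inl v)) = lam * (x (Inr e))\<^sup>2"
    using eqs unfolding power3_eigen_equations_iff by blast+
  define s where "s = csqrt lam"
  define y where "y u = csqrt (x (Inl u))" for u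
  define S where "S = {u\<in>V. x (Inl u) \<noteq> 0}"
  define c where "c e = (if x (Inr e) = (\<Prod>w\<in>e. y w) / s then 1 else (-1::real))" for e
  have s: "s\<^sup>2 = lam" "s \<noteq> 0" using lam unfolding s_def by auto
  have Inl: "x (Inl v) = (y v)\<^sup>2" if "v \<in> V" for v unfolding y_def by simp
  have outside: "y v = 0" if "v \<in> V" "v \<notin> S" for v using that unfolding S_def y_def by simp
  have c: "signing E c" unfolding signing_def c_def by simp
  have Inr: "x (Inr e) = (if e \<subseteq> S then of_real (c e) * (\<Prod>w\<in>e. y w) / s else 0)" if e: "e \<in> E" for e
    using power3_edge_entry[OF e eqR[OF e, folded s(1)] s(2) Inl outside] unfolding c_def by auto
  define z where "z u = (y u) ^ 3" for u
  have eig: "(\<Sum>v\<in>V. of_real (signed_adj_on E S c u v) * z v) = s ^ 3 * z u" if u: "u \<in> V" for u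
  proof (cases "u \<in> S")
    case False
    then show ?thesis using outside[OF u] unfolding z_def signed_adj_on_def by simp
  next
    case True
    then have "y u \<noteq> 0" unfolding S_def y_def by simp
    have "y u / s * (\<Sum>v\<in>V. of_real (signed_adj_on E S c u v) * z v) = s\<^sup>2 * ((y u)\<^sup>2)\<^sup>2"
      using power3_vertex_sum[OF u Inl Inr outside] eqL[OF u] Inl[OF u] s(1) unfolding z_def by simp
    also have "\<dots> = y u / s * (s ^ 3 * z u)"
      unfolding z_def using s(2) by (simp add: field_simps power2_eq_square power3_eq_cube)
    finally show ?thesis using \<open>y u \<noteq> 0\<close> s(2) by simp
  qed
  obtain u where "u \<in> V" "x (Inl u) \<noteq> 0" by (rule power3_vertex_entry_nonzero[OF nz lam eqR])
  then have w: "u \<in> V" "z u \<noteq> 0" unfolding z_def y_def by auto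
  have "mat_eigenvalue V (signed_adj_on E S c) (s ^ 3)"
    unfolding mat_eigenvalue_def by (intro exI[of _ z]) (use w eig in auto)
  then obtain \<mu> z' where \<mu>: "s ^ 3 = of_real \<mu>" "real_eigenpair V (signed_adj_on E S c) \<mu> z'"
    using symmetric_mat_eigenvalueE[OF finite_V symmetric_on_signed_adj_on] by metis
  have "root 3 (\<mu>\<^sup>2) = (cmod s)\<^sup>2" by (rule root3_sq_eq_if_cube[OF \<mu>(1)])
  moreover have "cmod lam = (cmod s)\<^sup>2" using s(1) by (metis norm_power)
  ultimately show ?thesis using that c \<mu>(2) by simp
qed

definition sub_eigenvalues :: "real set" where
  "sub_eigenvalues = {\<mu>. \<exists>S c z. signing E c \<and> real_eigenpair V (signed_adj_on E S c) \<mu> z}"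

lemma power3_moduli:
  "cmod ` {lam. hg_eigenvalue (power3_vertices V E) (power3_edges E) lam}
     = insert 0 ((\<lambda>\<mu>. root 3 (\<mu>\<^sup>2)) ` sub_eigenvalues)" (is "?L = ?R")
proof
  show "?L \<subseteq> ?R"
  proof
    fix t assume "t \<in> ?L"
    then obtain lam where lam: "hg_eigenvalue (power3_vertices V E) (power3_edges E) lam" "t = cmod lam"
      by auto
    show "t \<in> ?R"
    proof (cases "lam = 0")
      case True
      then show ?thesis using lam by simp
    next
      case False
      from signed_eigenpair_if_power3_eigenvalue[OF lam(1) False] obtain S c \<mu> z
        where "signing E c" "real_eigenpair V (signed_adj_on E S c) \<mu> z" "cmod lam = root 3 (\<mu>\<^sup>2)" .
      then show ?thesis using lam(2) unfolding sub_eigenvalues_def by blast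
    qed
  qed
  show "?R \<subseteq> ?L"
  proof
    fix t assume "t \<in> ?R"
    then consider "t = 0"
      | \<mu> S c z where "signing E c" "real_eigenpair V (signed_adj_on E S c) \<mu> z" "t = root 3 (\<mu>\<^sup>2)"
      unfolding sub_eigenvalues_def by blast
    then show "t \<in> ?L"
    proof cases
      case 1
      then show ?thesis using power3_eigenvalue_zero by (intro image_eqI[where x = 0]) simp_all
    next
      case 2
      then show ?thesis using power3_eigenvalue_if_signed_eigenpair[OF 2(1,2)]
        by (intro image_eqI[where x = "complex_of_real (root 3 (\<mu>\<^sup>2))"]) simp_all
    qed
  qed
qed

lemma finite_sub_eigenvalues: "finite sub_eigenvalues"
proof -
  let ?F = "\<lambda>(S, c). {\<mu>. mat_eigenvalue V (signed_adj_on E S c) (complex_of_real \<mu>)}"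
  have "sub_eigenvalues \<subseteq> (\<Union>Sc\<in>Pow V \<times> signings. ?F Sc)"
  proof
    fix \<mu> assume "\<mu> \<in> sub_eigenvalues"
    then obtain S c z where c: "signing E c" and z: "real_eigenpair V (signed_adj_on E S c) \<mu> z"
      unfolding sub_eigenvalues_def by blast
    have "real_eigenpair V (signed_adj_on E (S \<inter> V) (restrict c E)) \<mu> z"
      by (rule real_eigenpair_cong_mat[OF _ z]) (simp add: signed_adj_on_def signed_adj_restrict)
    moreover have "(S \<inter> V, restrict c E) \<in> Pow V \<times> signings" using c restrict_in_signings_iff by auto
    ultimately show "\<mu> \<in> (\<Union>Sc\<in>Pow V \<times> signings. ?F Sc)"
      using mat_eigenvalue_if_real_eigenpair by fastforce
  qed
  moreover have "finite (\<Union>Sc\<in>Pow V \<times> signings. ?F Sc)"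
    using finite_V finite_signings finite_real_mat_eigenvalues[OF finite_V] by auto
  ultimately show ?thesis by (rule finite_subset)
qed

end

section \<open>The second largest modulus\<close>

lemma root3_sq_le_iff: "root 3 (x\<^sup>2) \<le> root 3 (y\<^sup>2) \<longleftrightarrow> \<bar>x\<bar> \<le> \<bar>y :: real\<bar>"
  by (simp add: abs_le_square_iff)

lemma root3_sq_max:
  fixes a b :: real
  assumes "0 \<le> a" "0 \<le> b"
  shows "root 3 ((max a b)\<^sup>2) = max (root 3 (a\<^sup>2)) (root 3 (b\<^sup>2))"
  using assms by (auto simp: max_def root3_sq_le_iff)

lemma second_largest_modulus_eqI:
  fixes S :: "complex set"
  assumes fin: "finite (cmod ` S)" and a: "a \<in> cmod ` S" and b: "b \<in> cmod ` S" "b < a"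
    and largest: "\<And>t. t \<in> cmod ` S \<Longrightarrow> t \<le> a"
    and second: "\<And>t. t \<in> cmod ` S \<Longrightarrow> t < a \<Longrightarrow> t \<le> b"
  shows "second_largest_modulus S = b"
proof -
  have "Max (cmod ` S) = a" by (rule Max_eqI[OF fin largest a])
  moreover have "{r. \<exists>\<mu>\<in>S. r = cmod \<mu> \<and> r < a} = {t \<in> cmod ` S. t < a}" by auto
  moreover have "Max {t \<in> cmod ` S. t < a} = b" by (rule Max_eqI) (use fin b second in auto)
  ultimately show ?thesis unfolding second_largest_modulus_def Let_def by simp
qed

context connected_graph
begin

lemma spec_radius_nonneg:
  assumes "symmetric_on V M" shows "spec_radius V M \<ge> 0"
proof -
  obtain \<mu> z where "\<bar>\<mu>\<bar> = spec_radius V M" by (rule spec_radius_attained[OF finite_V V_nonempty assms])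
  then show ?thesis using abs_ge_zero[of \<mu>] by linarith
qed

lemma abs_sub_eigenvalue_le_rho:
  assumes "\<mu> \<in> sub_eigenvalues" shows "\<bar>\<mu>\<bar> \<le> rho"
proof -
  obtain S c z where c: "signing E c" and z: "real_eigenpair V (signed_adj_on E S c) \<mu> z"
    using assms unfolding sub_eigenvalues_def by blast
  show ?thesis by (rule abs_eigenvalue_le_rho[OF z abs_signed_adj_on_le_adj[OF c]])
qed

lemma real_eigenpair_signed_adj_on_V:
  "real_eigenpair V (signed_adj E c) \<mu> z \<Longrightarrow> real_eigenpair V (signed_adj_on E V c) \<mu> z"
  by (rule real_eigenpair_cong_mat) (simp add: signed_adj_on_def)

lemma adj_eigenvalue_in_sub_eigenvalues:
  assumes "real_eigenpair V (adj E) \<mu> z" shows "\<mu> \<in> sub_eigenvalues"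
proof -
  have "signing E (\<lambda>_. 1)" unfolding signing_def by simp
  moreover have "real_eigenpair V (signed_adj_on E V (\<lambda>_. 1)) \<mu> z"
    using real_eigenpair_signed_adj_on_V[of "\<lambda>_. 1"] assms unfolding signed_adj_one by blast
  ultimately show ?thesis unfolding sub_eigenvalues_def by blast
qed

lemma rho_in_sub_eigenvalues: "rho \<in> sub_eigenvalues"
proof -
  obtain p where "rayleigh_max V (adj E) rho p" by (rule rayleigh_max_rho)
  then show ?thesis
    using adj_eigenvalue_in_sub_eigenvalues rayleigh_max_eigenpair[OF finite_V symmetric_on_adj] by blast
qed

lemma rho_V_in_abs_sub_eigenvalues: "rho_V V E \<in> abs ` sub_eigenvalues"
proof -
  obtain v0 where v0: "v0 \<in> V" "rho_V V E = graph_rho (V - {v0}) {e\<in>E. v0 \<notin> e}" by (rule rho_V_attained)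
  let ?W = "V - {v0}"
  obtain \<mu> z where z: "real_eigenpair ?W (adj {e\<in>E. v0 \<notin> e}) \<mu> z" "\<bar>\<mu>\<bar> = graph_rho ?W {e\<in>E. v0 \<notin> e}"
    using spec_radius_attained[OF finite_Diff[OF finite_V] V_minus_nonempty symmetric_on_adj]
    unfolding graph_rho_def by blast
  define z' where "z' u = (if u \<in> ?W then z u else 0)" for u
  have "real_eigenpair V (signed_adj_on E ?W (\<lambda>_. 1)) \<mu> z'"
    unfolding real_eigenpair_def
  proof (intro conjI ballI)
    show "\<exists>u\<in>V. z' u \<noteq> 0" using z(1) unfolding real_eigenpair_def z'_def by auto
    fix u assume u: "u \<in> V"
    show "mat_vec V (signed_adj_on E ?W (\<lambda>_. 1)) z' u = \<mu> * z' u"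
    proof (cases "u = v0")
      case True
      then show ?thesis unfolding mat_vec_def signed_adj_on_def z'_def by simp
    next
      case False
      have "mat_vec V (signed_adj_on E ?W (\<lambda>_. 1)) z' u = (\<Sum>w\<in>?W. signed_adj_on E ?W (\<lambda>_. 1) u w * z' w)"
        unfolding mat_vec_def using finite_V v0(1) by (simp add: sum.remove z'_def)
      also have "\<dots> = mat_vec ?W (adj {e\<in>E. v0 \<notin> e}) z u"
        unfolding mat_vec_def using False u
        by (intro sum.cong refl) (simp add: signed_adj_on_def z'_def signed_adj_one adj_delete_vertex)
      also have "\<dots> = \<mu> * z' u" using z(1) u False unfolding real_eigenpair_def z'_def by simp
      finally show ?thesis .
    qed
  qed
  moreover have "signing E (\<lambda>_. 1)" unfolding signing_def by simp
  ultimately have "\<mu> \<in> sub_eigenvalues" unfolding sub_eigenvalues_def by blast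
  then show ?thesis using z(2) v0(2) by (intro image_eqI[where x = \<mu>]) simp_all
qed

lemma abs_lambda_min_in_abs_sub_eigenvalues: "\<bar>lambda_min V E\<bar> \<in> abs ` sub_eigenvalues"
  using lambda_min_eigenpair adj_eigenvalue_in_sub_eigenvalues by blast

lemma rho_Gamma_in_abs_sub_eigenvalues:
  assumes "Gamma_radii \<noteq> {}" shows "rho_Gamma V E \<in> abs ` sub_eigenvalues"
proof -
  obtain \<pi> where \<pi>: "signing E \<pi>" "rho_Gamma V E = spec_radius V (signed_adj E \<pi>)"
    by (rule rho_Gamma_attained[OF assms])
  obtain \<mu> z where z: "real_eigenpair V (signed_adj E \<pi>) \<mu> z" "\<bar>\<mu>\<bar> = spec_radius V (signed_adj E \<pi>)"
    using spec_radius_attained[OF finite_V V_nonempty symmetric_on_signed_adj] by blast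
  have "\<mu> \<in> sub_eigenvalues"
    unfolding sub_eigenvalues_def using \<pi>(1) real_eigenpair_signed_adj_on_V[OF z(1)] by blast
  then show ?thesis using z(2) \<pi>(2) by (intro image_eqI[where x = \<mu>]) simp_all
qed

lemma rho_Gamma_nonneg:
  assumes "Gamma_radii \<noteq> {}" shows "rho_Gamma V E \<ge> 0"
proof -
  obtain \<pi> where "rho_Gamma V E = spec_radius V (signed_adj E \<pi>)" by (rule rho_Gamma_attained[OF assms])
  then show ?thesis using spec_radius_nonneg[OF symmetric_on_signed_adj] by simp
qed

definition second_radius :: real where
  "second_radius = (if is_tree V E then rho_V V E
     else if is_unicyclic V E \<and> \<not> is_bipartite V E then max (rho_V V E) \<bar>lambda_min V E\<bar>
     else if is_bipartite V E then max (rho_V V E) (rho_Gamma V E)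
     else max (rho_V V E) (max (rho_Gamma V E) \<bar>lambda_min V E\<bar>))"

lemma rho_V_le_second_radius: "rho_V V E \<le> second_radius"
  unfolding second_radius_def by auto

lemma second_radius_in_abs_sub_eigenvalues: "second_radius \<in> abs ` sub_eigenvalues"
proof -
  have max_in: "max a b \<in> abs ` sub_eigenvalues"
    if "a \<in> abs ` sub_eigenvalues" "b \<in> abs ` sub_eigenvalues" for a b
    using that by (cases "a \<le> b") (simp_all add: max_def)
  have Gamma: "rho_Gamma V E \<in> abs ` sub_eigenvalues"
    if "\<not> is_tree V E" "\<not> (is_unicyclic V E \<and> \<not> is_bipartite V E)"
    by (rule rho_Gamma_in_abs_sub_eigenvalues[OF Gamma_radii_nonempty[OF that]])
  show ?thesis
    unfolding second_radius_def
    using rho_V_in_abs_sub_eigenvalues abs_lambda_min_in_abs_sub_eigenvalues Gamma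
    by (simp add: max_in)
qed

lemma rho_Gamma_less_rho:
  assumes "Gamma_radii \<noteq> {}" shows "rho_Gamma V E < rho"
proof -
  obtain \<pi> where "rho_Gamma V E = spec_radius V (signed_adj E \<pi>)" "spec_radius V (signed_adj E \<pi>) < rho"
    by (rule rho_Gamma_attained[OF assms])
  then show ?thesis by simp
qed

lemma second_radius_less_rho: "second_radius < rho"
  unfolding second_radius_def
  using rho_V_less_rho abs_lambda_min_less_rho rho_Gamma_less_rho[OF Gamma_radii_nonempty] bipartite_if_tree
  by auto

lemma abs_adj_eigenvalue_le_second_radius:
  assumes w: "real_eigenpair V (adj E) \<nu> w" and less: "\<bar>\<nu>\<bar> < rho"
  shows "\<bar>\<nu>\<bar> \<le> second_radius"
proof (cases "\<nu> \<ge> 0")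
  case True
  then have "\<nu> \<le> rho_V V E" using eigenvalue_le_rho_V[OF w] less by simp
  then show ?thesis using True rho_V_le_second_radius by simp
next
  case False
  show ?thesis
  proof (cases "is_bipartite V E")
    case True
    then obtain s where s: "s \<in> switchings" "\<forall>e\<in>E. (\<Prod>w\<in>e. s w) = -1"
      using bipartite_iff_switching by blast
    have "real_eigenpair V (adj E) ((-1) * \<nu>) (\<lambda>u. s u * w u)"
      by (rule switching_eigenpair[OF _ _ _ w[folded signed_adj_one]]) (use s switching_values in auto)
    then have "(-1) * \<nu> \<le> rho_V V E" by (rule eigenvalue_le_rho_V) (use less in simp)
    then show ?thesis using False rho_V_le_second_radius by simp
  next
    case not_bipartite: False
    then have "\<not> is_tree V E" using bipartite_if_tree by blast
    have "\<bar>\<nu>\<bar> \<le> \<bar>lambda_min V E\<bar>" using lambda_min_le[OF w] False by simp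
    also have "\<dots> \<le> second_radius" unfolding second_radius_def using \<open>\<not> is_tree V E\<close> not_bipartite by auto
    finally show ?thesis .
  qed
qed

lemma abs_eigenvalue_le_rho_V_if_outside:
  assumes c: "signing E c" and z: "real_eigenpair V (signed_adj_on E S c) \<mu> z"
    and v: "v \<in> V" "v \<notin> S"
  shows "\<bar>\<mu>\<bar> \<le> rho_V V E"
proof (cases "\<mu> = 0")
  case True
  then show ?thesis using rho_V_nonneg by simp
next
  case False
  have "mat_vec V (signed_adj_on E S c) z v = 0" unfolding mat_vec_def signed_adj_on_def using v by simp
  then have zv: "z v = 0" using z v False unfolding real_eigenpair_def by simp
  have "\<bar>\<mu>\<bar> * sq_norm V z \<le> quad_form V (adj E) (\<lambda>u. \<bar>z u\<bar>)"
    by (rule eigenvalue_le_dominating_quad_form[OF z abs_signed_adj_on_le_adj[OF c]])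
  also have "\<dots> \<le> rho_V V E * sq_norm V (\<lambda>u. \<bar>z u\<bar>)" by (rule quad_form_adj_le_rho_V[OF v(1)]) (simp add: zv)
  finally have "\<bar>\<mu>\<bar> * sq_norm V z \<le> rho_V V E * sq_norm V z" by simp
  moreover have "sq_norm V z > 0" using z sq_norm_pos[OF finite_V] unfolding real_eigenpair_def by blast
  ultimately show ?thesis by (metis mult_right_le_imp_le)
qed

lemma abs_eigenvalue_le_rho_Gamma_if_unbalanced:
  assumes c: "signing E c" and z: "real_eigenpair V (signed_adj E c) \<mu> z"
    and unbalanced: "restrict c E \<notin> balanced \<union> antibalanced"
  shows "\<bar>\<mu>\<bar> \<le> rho_Gamma V E"
proof -
  have "spec_radius V (signed_adj E c) \<noteq> rho" using balanced_if_spec_radius_eq_rho[OF c] unbalanced by blast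
  then have radius: "spec_radius V (signed_adj E c) < rho" using spec_radius_signed_le_rho[OF c] by simp
  have "\<bar>\<mu>\<bar> \<le> spec_radius V (signed_adj E c)" by (rule abs_le_spec_radius[OF finite_V z])
  also have "\<dots> \<le> rho_Gamma V E" by (rule spec_radius_le_rho_Gamma[OF c radius])
  finally show ?thesis .
qed

lemma abs_sub_eigenvalue_le_second_radius:
  assumes \<mu>: "\<mu> \<in> sub_eigenvalues" and less: "\<bar>\<mu>\<bar> < rho"
  shows "\<bar>\<mu>\<bar> \<le> second_radius"
proof -
  obtain S c z where c: "signing E c" and z: "real_eigenpair V (signed_adj_on E S c) \<mu> z"
    using \<mu> unfolding sub_eigenvalues_def by blast
  show ?thesis
  proof (cases "V \<subseteq> S")
    case False
    then obtain v where "v \<in> V" "v \<notin> S" by blast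
    then have "\<bar>\<mu>\<bar> \<le> rho_V V E" by (rule abs_eigenvalue_le_rho_V_if_outside[OF c z])
    then show ?thesis using rho_V_le_second_radius by linarith
  next
    case True
    have zs: "real_eigenpair V (signed_adj E c) \<mu> z"
      by (rule real_eigenpair_cong_mat[OF _ z]) (use True in \<open>auto simp: signed_adj_on_def\<close>)
    show ?thesis
    proof (cases "restrict c E \<in> balanced \<union> antibalanced")
      case True
      then obtain \<nu> y where \<nu>: "real_eigenpair V (adj E) \<nu> y" "\<bar>\<nu>\<bar> = \<bar>\<mu>\<bar>"
        by (rule adj_eigenvalue_if_balanced[OF _ zs])
      then show ?thesis using abs_adj_eigenvalue_le_second_radius[OF \<nu>(1)] less by simp
    next
      case unbalanced: False
      have "restrict c E \<in> signings" using c restrict_in_signings_iff by blast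
      then have "\<not> is_tree V E" "\<not> (is_unicyclic V E \<and> \<not> is_bipartite V E)"
        using unbalanced balanced_eq_signings_if_tree balanced_un_antibalanced_if_unicyclic by auto
      then show ?thesis
        using abs_eigenvalue_le_rho_Gamma_if_unbalanced[OF c zs unbalanced] unfolding second_radius_def by auto
    qed
  qed
qed

lemma Lambda3_eq_second_radius: "Lambda3 V E = root 3 (second_radius\<^sup>2)"
proof -
  let ?f = "\<lambda>\<mu>::real. root 3 (\<mu>\<^sup>2)"
  have rho: "rho \<ge> 0" using rho_ge_1 by simp
  obtain \<mu>2 where \<mu>2: "second_radius = \<bar>\<mu>2\<bar>" "\<mu>2 \<in> sub_eigenvalues"
    using second_radius_in_abs_sub_eigenvalues by (rule imageE)
  have "second_radius\<^sup>2 < rho\<^sup>2"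
    using second_radius_less_rho rho_V_nonneg rho_V_le_second_radius by (intro power_strict_mono) auto
  then have second_less: "?f second_radius < ?f rho" by simp
  show ?thesis
    unfolding Lambda3_def
  proof (rule second_largest_modulus_eqI, unfold power3_moduli)
    show "finite (insert 0 (?f ` sub_eigenvalues))" using finite_sub_eigenvalues by simp
    show "?f rho \<in> insert 0 (?f ` sub_eigenvalues)" using rho_in_sub_eigenvalues by simp
    have "?f second_radius = ?f \<mu>2" unfolding \<mu>2(1) by simp
    then show "?f second_radius \<in> insert 0 (?f ` sub_eigenvalues)" using \<mu>2(2) by simp
    show "?f second_radius < ?f rho" by (rule second_less)
  next
    fix t assume "t \<in> insert 0 (?f ` sub_eigenvalues)"
    then consider "t = 0" | \<mu> where "\<mu> \<in> sub_eigenvalues" "t = ?f \<mu>" by blast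
    then show "t \<le> ?f rho"
    proof cases
      case 2
      then show ?thesis using abs_sub_eigenvalue_le_rho[OF 2(1)] rho root3_sq_le_iff[of \<mu> rho] by simp
    qed simp
  next
    fix t assume "t \<in> insert 0 (?f ` sub_eigenvalues)" and less: "t < ?f rho"
    then consider "t = 0" | \<mu> where "\<mu> \<in> sub_eigenvalues" "t = ?f \<mu>" by blast
    then show "t \<le> ?f second_radius"
    proof cases
      case 2
      then have "\<bar>\<mu>\<bar> < rho" using less rho root3_sq_le_iff[of rho \<mu>] by simp
      then have "\<bar>\<mu>\<bar> \<le> \<bar>second_radius\<bar>"
        using abs_sub_eigenvalue_le_second_radius[OF 2(1)] by fastforce
      then show ?thesis using 2(2) root3_sq_le_iff[of \<mu> second_radius] by simp
    qed simp
  qed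
qed

end

theorem mainTheorem5:
  fixes V :: "'a set" and E :: "'a set set"
  assumes "simple_graph V E" and "graph_connected V E" and "E \<noteq> {}"
  shows "Lambda3 V E =
    (if is_tree V E then root 3 ((rho_V V E)\<^sup>2)
     else if is_unicyclic V E \<and> \<not> is_bipartite V E then
       max (root 3 ((rho_V V E)\<^sup>2)) (root 3 ((lambda_min V E)\<^sup>2))
     else if is_bipartite V E then
       max (root 3 ((rho_V V E)\<^sup>2)) (root 3 ((rho_Gamma V E)\<^sup>2))
     else Max {root 3 ((rho_V V E)\<^sup>2), root 3 ((rho_Gamma V E)\<^sup>2),
               root 3 ((lambda_min V E)\<^sup>2)})"
proof -
  interpret connected_graph V E using assms by unfold_locales
  have lambda_min: "root 3 ((lambda_min V E)\<^sup>2) = root 3 (\<bar>lambda_min V E\<bar>\<^sup>2)" by simp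
  show ?thesis
  proof (cases "is_tree V E \<or> is_unicyclic V E \<and> \<not> is_bipartite V E")
    case True
    then show ?thesis
      unfolding Lambda3_eq_second_radius second_radius_def lambda_min
      using rho_V_nonneg by (auto simp: root3_sq_max)
  next
    case False
    then have "rho_Gamma V E \<ge> 0" using rho_Gamma_nonneg Gamma_radii_nonempty by blast
    then show ?thesis
      unfolding Lambda3_eq_second_radius second_radius_def lambda_min
      using False rho_V_nonneg by (auto simp: root3_sq_max)
  qed
qed

end
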